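(* Let $W$ be the affine Weyl group of an irreducible reduced crystallographic root system of rank 2, with simple generators $s_0,s_1,s_2$ and $W_0=\langle s_1,s_2\rangle$. Let $H_{r_0},H_{r_1}$ be adjacent parallel hyperplanes ($H_{\alpha,c}$ and $H_{\alpha,c+1}$ for some root $\alpha$, $c\in\mathbb{Z}$) and suppose both the alcove $w\in W$ and the identity alcove lie in the strip between them. Suppose $D_R(w)=\{0,i\}$ with $i\in\{1,2\}$. If $(s_0s_i)^2\neq 1$, then $ws_i$ is the minimal length element of the coset $wW_0$.
   Context: $W$ is generated by the reflections in the lines $H_{\beta,k}=\{v:\langle v,\beta\rangle=k\}$ ($\beta$ a root, $k\in\mathbb{Z}$) in a Euclidean plane; its simple generators $s_0,s_1,s_2$ are the reflections in the walls of the fundamental alcove $A_0$, $s_0$ being the reflection in the wall not through the origin, and $W_0=\langle s_1,s_2\rangle$. Elements are identified with alcoves via $w\mapsto wA_0$. $\ell$ is Coxeter length; $D_R(w)=\{j:\ell(ws_j)<\ell(w)\}$. *)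

theory Defs
  imports "HOL-Analysis.Analysis"
begin

type_synonym vec2 = "real ^ 2"

definition root_system :: "vec2 set \<Rightarrow> bool" where
  "root_system R \<longleftrightarrow>
     finite R \<and> 0 \<notin> R \<and> span R = UNIV \<and>
     (\<forall>\<alpha>\<in>R. \<forall>\<beta>\<in>R. \<beta> - (2 * (\<beta> \<bullet> \<alpha>) / (\<alpha> \<bullet> \<alpha>)) *\<^sub>R \<alpha> \<in> R) \<and>
     (\<forall>\<alpha>\<in>R. \<forall>\<beta>\<in>R. 2 * (\<beta> \<bullet> \<alpha>) / (\<alpha> \<bullet> \<alpha>) \<in> \<int>) \<and>
     (\<forall>\<alpha>\<in>R. \<forall>c::real. c *\<^sub>R \<alpha> \<in> R \<longrightarrow> c = 1 \<or> c = -1) \<and>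
     \<not> (\<exists>R1 R2. R1 \<noteq> {} \<and> R2 \<noteq> {} \<and> R1 \<union> R2 = R \<and> R1 \<inter> R2 = {} \<and>
                 (\<forall>a\<in>R1. \<forall>b\<in>R2. a \<bullet> b = 0))"

definition hyp :: "vec2 \<Rightarrow> int \<Rightarrow> vec2 set" where
  "hyp \<beta> k = {v. v \<bullet> \<beta> = of_int k}"

definition refl :: "vec2 \<Rightarrow> int \<Rightarrow> vec2 \<Rightarrow> vec2" where
  "refl \<beta> k v = v - ((v \<bullet> \<beta> - of_int k) * (2 / (\<beta> \<bullet> \<beta>))) *\<^sub>R \<beta>"

definition hyperplanes :: "vec2 set \<Rightarrow> vec2 set set" where
  "hyperplanes R = {H. \<exists>\<beta>\<in>R. \<exists>k::int. H = hyp \<beta> k}"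

definition alcove :: "vec2 set \<Rightarrow> vec2 set \<Rightarrow> bool" where
  "alcove R A \<longleftrightarrow> A \<in> components (UNIV - \<Union>(hyperplanes R))"

text \<open>A wall of an alcove: a hyperplane of the arrangement meeting the closure
  of the alcove in more than one point (i.e. in an edge).\<close>
definition wall :: "vec2 set \<Rightarrow> vec2 set \<Rightarrow> vec2 set \<Rightarrow> bool" where
  "wall R A H \<longleftrightarrow> H \<in> hyperplanes R \<and>
     (\<exists>p q. p \<noteq> q \<and> p \<in> H \<inter> closure A \<and> q \<in> H \<inter> closure A)"

inductive_set affW :: "vec2 set \<Rightarrow> (vec2 \<Rightarrow> vec2) set" for R where
  id: "id \<in> affW R"
| step: "\<beta> \<in> R \<Longrightarrow> w \<in> affW R \<Longrightarrow> refl \<beta> k \<circ> w \<in> affW R"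

definition simple_system :: "vec2 set \<Rightarrow> vec2 set \<Rightarrow> (nat \<Rightarrow> vec2 \<Rightarrow> vec2) \<Rightarrow> bool" where
  "simple_system R A0 s \<longleftrightarrow> alcove R A0 \<and> 0 \<in> closure A0 \<and>
     (\<exists>\<beta>0 \<beta>1 \<beta>2 (k0::int). \<beta>0 \<in> R \<and> \<beta>1 \<in> R \<and> \<beta>2 \<in> R \<and> k0 \<noteq> 0 \<and>
        wall R A0 (hyp \<beta>0 k0) \<and> wall R A0 (hyp \<beta>1 0) \<and> wall R A0 (hyp \<beta>2 0) \<and>
        hyp \<beta>1 0 \<noteq> hyp \<beta>2 0 \<and>
        s 0 = refl \<beta>0 k0 \<and> s 1 = refl \<beta>1 0 \<and> s 2 = refl \<beta>2 0)"

definition word :: "(nat \<Rightarrow> vec2 \<Rightarrow> vec2) \<Rightarrow> nat list \<Rightarrow> vec2 \<Rightarrow> vec2" where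
  "word s js = foldr (\<lambda>j f. s j \<circ> f) js id"

definition len :: "(nat \<Rightarrow> vec2 \<Rightarrow> vec2) \<Rightarrow> (vec2 \<Rightarrow> vec2) \<Rightarrow> nat" where
  "len s w = (LEAST n. \<exists>js. length js = n \<and> set js \<subseteq> {0,1,2} \<and> w = word s js)"

definition right_descents :: "(nat \<Rightarrow> vec2 \<Rightarrow> vec2) \<Rightarrow> (vec2 \<Rightarrow> vec2) \<Rightarrow> nat set" where
  "right_descents s w = {j \<in> {0,1,2}. len s (w \<circ> s j) < len s w}"

definition W0 :: "(nat \<Rightarrow> vec2 \<Rightarrow> vec2) \<Rightarrow> (vec2 \<Rightarrow> vec2) set" where
  "W0 s = {word s js | js. set js \<subseteq> {1,2}}"

definition strip :: "vec2 \<Rightarrow> int \<Rightarrow> vec2 set" where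
  "strip \<alpha> c = {v. of_int c < v \<bullet> \<alpha> \<and> v \<bullet> \<alpha> < of_int c + 1}"

end

theory Submission
  imports Defs
begin

text \<open>
  The length of \<open>u\<close> is the number of root hyperplanes separating \<open>A0\<close> from \<open>u A0\<close>, and
  \<open>j\<close> is a right descent of \<open>w\<close> iff the wall \<open>w H\<^sub>j\<close> is one of them. Pulling back by
  \<open>w\<^sup>-\<^sup>1\<close>, the point \<open>q = w\<^sup>-\<^sup>1 p0\<close> lies beyond the walls \<open>H\<^sub>0\<close> and \<open>H\<^sub>i\<close> of \<open>A0\<close> and, by the
  strip hypothesis, strictly between two consecutive hyperplanes of some positive root.
  Checking the root systems \<open>A2\<close>, \<open>B2\<close>, \<open>G2\<close> in coordinates, this puts \<open>s\<^sub>i q\<close> into the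
  dominant chamber unless the highest root is orthogonal to the simple root of \<open>s\<^sub>i\<close>, that
  is, unless \<open>s\<^sub>0\<close> and \<open>s\<^sub>i\<close> commute. Then \<open>q\<close> and \<open>s\<^sub>i A0\<close> lie in the same Weyl chamber,
  so every hyperplane separating them avoids the origin and therefore also separates \<open>q\<close>
  from \<open>v A0\<close> for each \<open>v \<in> W0\<close>; counting hyperplanes gives \<open>len (w s\<^sub>i) \<le> len (w v)\<close>.
\<close>

section \<open>Affine reflections in the plane\<close>

definition cartan :: "vec2 \<Rightarrow> vec2 \<Rightarrow> real" where
  "cartan \<beta> \<alpha> = 2 * (\<beta> \<bullet> \<alpha>) / (\<alpha> \<bullet> \<alpha>)"

lemma inner_refl:
  "refl \<beta> k v \<bullet> \<gamma> - of_int m = v \<bullet> (\<gamma> - cartan \<gamma> \<beta> *\<^sub>R \<beta>) - (of_int m - of_int k * cartan \<gamma> \<beta>)"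
  unfolding refl_def cartan_def
  by (cases "\<beta> \<bullet> \<beta> = 0")
     (simp_all add: inner_diff_left inner_diff_right inner_commute algebra_simps
        diff_divide_distrib add_divide_distrib)

lemma inner_refl_self:
  assumes "\<beta> \<noteq> 0"
  shows "refl \<beta> k v \<bullet> \<beta> - of_int k = - (v \<bullet> \<beta> - of_int k)"
  using assms unfolding refl_def by (simp add: inner_diff_left algebra_simps diff_divide_distrib)

lemma refl_refl:
  assumes "\<beta> \<noteq> 0"
  shows "refl \<beta> k (refl \<beta> k v) = v"
proof -
  have unfold: "refl \<beta> k u = u - ((u \<bullet> \<beta> - of_int k) * (2 / (\<beta> \<bullet> \<beta>))) *\<^sub>R \<beta>" for u
    by (simp add: refl_def)
  have "(refl \<beta> k v \<bullet> \<beta> - of_int k) * (2 / (\<beta> \<bullet> \<beta>)) = - ((v \<bullet> \<beta> - of_int k) * (2 / (\<beta> \<bullet> \<beta>)))"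
    using inner_refl_self[OF assms, of k v] by (metis minus_mult_left)
  then have "refl \<beta> k (refl \<beta> k v) = refl \<beta> k v + ((v \<bullet> \<beta> - of_int k) * (2 / (\<beta> \<bullet> \<beta>))) *\<^sub>R \<beta>"
    by (subst unfold) simp
  also have "\<dots> = v" by (subst unfold) simp
  finally show ?thesis .
qed

lemma refl_fixes_hyp: "v \<in> hyp \<beta> k \<Longrightarrow> refl \<beta> k v = v"
  by (simp add: refl_def hyp_def)

lemma refl_scaleR:
  assumes "c \<noteq> 0" "of_int k' = c * of_int k"
  shows "refl (c *\<^sub>R \<beta>) k' = refl \<beta> k"
proof
  fix v
  have "((v \<bullet> (c *\<^sub>R \<beta>) - of_int k') * (2 / ((c *\<^sub>R \<beta>) \<bullet> (c *\<^sub>R \<beta>)))) *\<^sub>R (c *\<^sub>R \<beta>)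
      = ((v \<bullet> \<beta> - of_int k) * (2 / (\<beta> \<bullet> \<beta>))) *\<^sub>R \<beta>"
    using assms by (cases "\<beta> = 0") (simp_all add: algebra_simps power2_eq_square diff_divide_distrib)
  then show "refl (c *\<^sub>R \<beta>) k' v = refl \<beta> k v" by (simp add: refl_def)
qed

lemma refl_uminus: "refl (- \<beta>) (- k) = refl \<beta> k"
  using refl_scaleR[of "-1" "- k" k \<beta>] by simp

lemma hyp_uminus: "hyp (- \<beta>) (- k) = hyp \<beta> k"
  by (auto simp: hyp_def)

lemma refl_conj_refl:
  assumes "\<delta> \<noteq> 0" "\<gamma> \<noteq> 0" "of_int m' = of_int m - of_int e * cartan \<gamma> \<delta>"
  shows "refl \<delta> e (refl \<gamma> m v) = refl (\<gamma> - cartan \<gamma> \<delta> *\<^sub>R \<delta>) m' (refl \<delta> e v)"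
proof -
  define n where "n = cartan \<gamma> \<delta>"
  define \<gamma>' where "\<gamma>' = \<gamma> - n *\<^sub>R \<delta>"
  have dd: "\<delta> \<bullet> \<delta> \<noteq> 0" using assms(1) by simp
  have gg: "\<gamma>' \<bullet> \<gamma>' = \<gamma> \<bullet> \<gamma>"
    unfolding \<gamma>'_def n_def cartan_def using dd
    by (simp add: inner_diff_left inner_diff_right inner_commute algebra_simps power2_eq_square)
  have n': "cartan \<gamma>' \<delta> = - n"
    unfolding \<gamma>'_def n_def cartan_def using dd by (simp add: inner_diff_left field_simps)
  have "refl \<delta> e v \<bullet> \<gamma>' - of_int m' = v \<bullet> (\<gamma>' + n *\<^sub>R \<delta>) - (of_int m' + of_int e * n)"
    using inner_refl[of \<delta> e v \<gamma>' m'] n' by simp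
  then have t: "refl \<delta> e v \<bullet> \<gamma>' - of_int m' = v \<bullet> \<gamma> - of_int m"
    unfolding \<gamma>'_def using assms(3) by (simp add: n_def algebra_simps)
  have "refl \<gamma>' m' (refl \<delta> e v) = refl \<delta> e v - ((v \<bullet> \<gamma> - of_int m) * (2 / (\<gamma> \<bullet> \<gamma>))) *\<^sub>R \<gamma>'"
    by (simp add: refl_def gg t[symmetric])
  also have "\<dots> = refl \<delta> e (refl \<gamma> m v)"
    unfolding refl_def \<gamma>'_def n_def cartan_def using dd
    by (simp add: inner_diff_left inner_diff_right inner_commute algebra_simps)
       (simp add: diff_divide_distrib scaleR_diff_left)
  finally show ?thesis unfolding \<gamma>'_def n_def ..
qed

lemma refl_commute_orthogonal:
  assumes "\<delta> \<noteq> 0" "\<gamma> \<noteq> 0" "\<gamma> \<bullet> \<delta> = 0"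
  shows "refl \<delta> e \<circ> refl \<gamma> m = refl \<gamma> m \<circ> refl \<delta> e"
  using refl_conj_refl[OF assms(1,2), of m m e] assms(3) by (simp add: fun_eq_iff cartan_def)

definition det2 :: "vec2 \<Rightarrow> vec2 \<Rightarrow> real" where
  "det2 x y = x$1 * y$2 - x$2 * y$1"

lemma inner_vec2: "(x::vec2) \<bullet> y = x$1 * y$1 + x$2 * y$2"
  by (simp add: inner_vec_def sum_2)

lemma vec2_eqI: "x$1 = y$1 \<Longrightarrow> x$2 = y$2 \<Longrightarrow> (x::vec2) = y"
  by (simp add: vec_eq_iff forall_2)

lemma vec2_nonzero_component: "(x::vec2) \<noteq> 0 \<Longrightarrow> x$1 \<noteq> 0 \<or> x$2 \<noteq> 0"
  by (auto simp: vec_eq_iff forall_2)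

lemma det2_eq_0_imp_parallel:
  assumes "\<beta> \<noteq> 0" "det2 \<beta> \<gamma> = 0"
  shows "\<gamma> = ((\<gamma> \<bullet> \<beta>) / (\<beta> \<bullet> \<beta>)) *\<^sub>R \<beta>"
proof -
  have bb: "\<beta>$1 * \<beta>$1 + \<beta>$2 * \<beta>$2 \<noteq> 0" using assms(1) by (simp add: inner_vec2[symmetric])
  have d: "\<beta>$1 * \<gamma>$2 = \<beta>$2 * \<gamma>$1" using assms(2) by (simp add: det2_def)
  have "\<gamma>$1 * (\<beta>$1 * \<beta>$1 + \<beta>$2 * \<beta>$2) = (\<gamma>$1 * \<beta>$1 + \<gamma>$2 * \<beta>$2) * \<beta>$1"
       "\<gamma>$2 * (\<beta>$1 * \<beta>$1 + \<beta>$2 * \<beta>$2) = (\<gamma>$1 * \<beta>$1 + \<gamma>$2 * \<beta>$2) * \<beta>$2"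
    using d by (simp_all add: algebra_simps)
  with bb show ?thesis by (intro vec2_eqI) (simp_all add: inner_vec2 field_simps)
qed

lemma det2_eq_0_if_orthogonal:
  assumes "d \<noteq> 0" "\<beta> \<bullet> d = 0" "\<gamma> \<bullet> d = 0"
  shows "det2 \<beta> \<gamma> = 0"
proof -
  have "det2 \<beta> \<gamma> * d$2 = \<beta>$1 * (\<gamma> \<bullet> d) - \<gamma>$1 * (\<beta> \<bullet> d)"
       "det2 \<beta> \<gamma> * d$1 = \<gamma>$2 * (\<beta> \<bullet> d) - \<beta>$2 * (\<gamma> \<bullet> d)"
    unfolding det2_def inner_vec2 by algebra+
  then show ?thesis using assms vec2_nonzero_component[OF assms(1)] by auto
qed

lemma det2_expansion:
  assumes "det2 e f \<noteq> 0"
  shows "v = (det2 v f / det2 e f) *\<^sub>R e + (det2 e v / det2 e f) *\<^sub>R f"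
proof -
  have "det2 e f *\<^sub>R v = det2 v f *\<^sub>R e + det2 e v *\<^sub>R f"
    by (rule vec2_eqI) (simp_all add: det2_def algebra_simps)
  then have "v = inverse (det2 e f) *\<^sub>R (det2 v f *\<^sub>R e + det2 e v *\<^sub>R f)"
    using assms by (metis scaleR_left_imp_eq scaleR_scaleR right_inverse scaleR_one)
  then show ?thesis by (simp add: scaleR_add_right divide_inverse_commute)
qed

lemma det2_inner_eqI:
  assumes "det2 e f \<noteq> 0" "x \<bullet> e = y \<bullet> e" "x \<bullet> f = y \<bullet> f"
  shows "x = y"
proof -
  have "(x - y) \<bullet> e = 0" "(x - y) \<bullet> f = 0" using assms by (simp_all add: inner_diff_left)
  then show ?thesis
    using det2_eq_0_if_orthogonal[of "x - y" e f] assms(1) by (auto simp: inner_commute)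
qed

lemma det2_square: "(e \<bullet> e) * (f \<bullet> f) - (e \<bullet> f)\<^sup>2 = (det2 e f)\<^sup>2"
  by (simp add: inner_vec2 det2_def power2_eq_square algebra_simps)

lemma hyp_common_points_imp_scaled:
  assumes "\<beta> \<noteq> 0" "\<gamma> \<noteq> 0" "p \<noteq> q"
    and "p \<in> hyp \<beta> k" "q \<in> hyp \<beta> k" "p \<in> hyp \<gamma> m" "q \<in> hyp \<gamma> m"
  obtains c where "c \<noteq> 0" "\<gamma> = c *\<^sub>R \<beta>" "of_int m = c * of_int k"
proof -
  have "det2 \<beta> \<gamma> = 0"
    using assms by (intro det2_eq_0_if_orthogonal[of "p - q"]) (auto simp: hyp_def inner_diff_right inner_commute)
  then have g: "\<gamma> = ((\<gamma> \<bullet> \<beta>) / (\<beta> \<bullet> \<beta>)) *\<^sub>R \<beta>" by (rule det2_eq_0_imp_parallel[OF assms(1)])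
  moreover have "(\<gamma> \<bullet> \<beta>) / (\<beta> \<bullet> \<beta>) \<noteq> 0" using assms(2) g by (metis scaleR_zero_left)
  moreover have "of_int m = (\<gamma> \<bullet> \<beta>) / (\<beta> \<bullet> \<beta>) * of_int k"
    using assms(4,6) g unfolding hyp_def by (metis (mono_tags) inner_commute inner_scaleR_right mem_Collect_eq)
  ultimately show ?thesis using that by blast
qed

lemma hyp_scaleR: "c \<noteq> 0 \<Longrightarrow> of_int m = c * of_int k \<Longrightarrow> hyp (c *\<^sub>R \<beta>) m = hyp \<beta> k"
  by (auto simp: hyp_def)

lemma hyp_eq_imp_scaled:
  assumes "\<beta> \<noteq> 0" "\<gamma> \<noteq> 0" "hyp \<beta> k = hyp \<gamma> m"
  obtains c where "c \<noteq> 0" "\<gamma> = c *\<^sub>R \<beta>" "of_int m = c * of_int k"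
proof -
  define p where "p = (of_int k / (\<beta> \<bullet> \<beta>)) *\<^sub>R \<beta>"
  define r where "r = (vector [- \<beta>$2, \<beta>$1] :: vec2)"
  have "r \<noteq> 0" "r \<bullet> \<beta> = 0"
    using vec2_nonzero_component[OF assms(1)] by (auto simp: r_def inner_vec2 vec_eq_iff forall_2)
  moreover have "p \<in> hyp \<beta> k" using assms(1) by (simp add: p_def hyp_def inner_commute)
  ultimately have "p \<in> hyp \<beta> k" "p + r \<in> hyp \<beta> k" "p \<noteq> p + r"
    by (simp_all add: hyp_def inner_add_left)
  then show ?thesis using hyp_common_points_imp_scaled[OF assms(1,2)] assms(3) that by metis
qed

lemma refl_eq_if_hyp_eq:
  assumes "\<beta> \<noteq> 0" "\<gamma> \<noteq> 0" "hyp \<beta> k = hyp \<gamma> m"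
  shows "refl \<gamma> m = refl \<beta> k"
  using hyp_eq_imp_scaled[OF assms] refl_scaleR by metis

lemma det2_nonzero_if_hyp_neq:
  assumes "\<beta> \<noteq> 0" "\<gamma> \<noteq> 0" "hyp \<beta> 0 \<noteq> hyp \<gamma> 0"
  shows "det2 \<beta> \<gamma> \<noteq> 0"
proof
  assume "det2 \<beta> \<gamma> = 0"
  then have "\<gamma> = ((\<gamma> \<bullet> \<beta>) / (\<beta> \<bullet> \<beta>)) *\<^sub>R \<beta>" by (rule det2_eq_0_imp_parallel[OF assms(1)])
  then obtain c where "\<gamma> = c *\<^sub>R \<beta>" "c \<noteq> 0" using assms(2) by (metis scaleR_zero_left)
  then show False using hyp_scaleR[of c 0 0 \<beta>] assms(3) by simp
qed

definition separates :: "vec2 set \<Rightarrow> vec2 \<Rightarrow> vec2 \<Rightarrow> bool" where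
  "separates H x y \<longleftrightarrow>
     (\<exists>\<beta> k. \<beta> \<noteq> 0 \<and> H = hyp \<beta> k \<and> (x \<bullet> \<beta> - of_int k) * (y \<bullet> \<beta> - of_int k) < 0)"

lemma separates_hyp_iff:
  assumes "\<beta> \<noteq> 0"
  shows "separates (hyp \<beta> k) x y \<longleftrightarrow> (x \<bullet> \<beta> - of_int k) * (y \<bullet> \<beta> - of_int k) < 0"
proof
  assume "separates (hyp \<beta> k) x y"
  then obtain \<beta>' k' where b: "\<beta>' \<noteq> 0" "hyp \<beta> k = hyp \<beta>' k'"
    "(x \<bullet> \<beta>' - of_int k') * (y \<bullet> \<beta>' - of_int k') < 0" unfolding separates_def by blast
  obtain c where c: "c \<noteq> 0" "\<beta>' = c *\<^sub>R \<beta>" "of_int k' = c * of_int k"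
    using hyp_eq_imp_scaled[OF assms b(1,2)] by blast
  have "(x \<bullet> \<beta>' - of_int k') * (y \<bullet> \<beta>' - of_int k') = (c * c) * ((x \<bullet> \<beta> - of_int k) * (y \<bullet> \<beta> - of_int k))"
    using c by (simp add: algebra_simps)
  moreover have "c * c > 0" using c(1) not_real_square_gt_zero by blast
  ultimately show "(x \<bullet> \<beta> - of_int k) * (y \<bullet> \<beta> - of_int k) < 0"
    using b(3) by (auto simp: mult_less_0_iff)
qed (use assms in \<open>auto simp: separates_def\<close>)

lemma mult_less_0_iff_xor:
  fixes a b c :: real
  assumes "a \<noteq> 0" "b \<noteq> 0" "c \<noteq> 0"
  shows "a * c < 0 \<longleftrightarrow> (a * b < 0) \<noteq> (b * c < 0)"
  using assms by (auto simp: mult_less_0_iff)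

lemma take_eq_take_nth_take_drop:
  assumes "a < c" "c \<le> length js"
  shows "take c js = take a js @ [js ! a] @ take (c - a - 1) (drop (a + 1) js)"
proof -
  have "take c js = take a js @ take (c - a) (drop a js)"
    using assms by (metis add_diff_inverse_nat less_imp_le_nat not_le take_add)
  moreover have "drop a js = js ! a # drop (a + 1) js" using assms by (simp add: Cons_nth_drop_Suc)
  moreover have "take (c - a) (js ! a # drop (a + 1) js) = js ! a # take (c - a - 1) (drop (a + 1) js)"
    using assms by (cases "c - a") auto
  ultimately show ?thesis by simp
qed

lemma word_Nil [simp]: "word s [] = id"
  by (simp add: word_def)

lemma word_Cons [simp]: "word s (j # js) = s j \<circ> word s js"
  by (simp add: word_def)

lemma word_append: "word s (xs @ ys) = word s xs \<circ> word s ys"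
  by (induction xs) (auto simp: word_def)

section \<open>The group generated by the walls of an alcove\<close>

lemma vimage_hyp_eq:
  assumes "\<And>x. u x \<bullet> \<gamma> - of_int m = x \<bullet> \<gamma>' - of_int m'"
  shows "u -` hyp \<gamma> m = hyp \<gamma>' m'"
proof (intro set_eqI)
  fix x
  have "u x \<bullet> \<gamma> = x \<bullet> \<gamma>' - of_int m' + of_int m" using assms[of x] by linarith
  then show "x \<in> u -` hyp \<gamma> m \<longleftrightarrow> x \<in> hyp \<gamma>' m'" by (simp add: hyp_def)
qed

lemma refl_image_eq_vimage:
  assumes "\<delta> \<noteq> 0"
  shows "refl \<delta> e ` S = refl \<delta> e -` S"
proof (intro set_eqI iffI)
  fix x assume "x \<in> refl \<delta> e -` S"
  then have "refl \<delta> e (refl \<delta> e x) \<in> refl \<delta> e ` S" by blast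
  then show "x \<in> refl \<delta> e ` S" using refl_refl[OF assms] by simp
qed (use refl_refl[OF assms] in auto)

locale alcove_walls =
  fixes R :: "vec2 set" and A0 :: "vec2 set" and p0 :: vec2
    and \<rho> :: "nat \<Rightarrow> vec2" and \<kappa> :: "nat \<Rightarrow> int" and s :: "nat \<Rightarrow> vec2 \<Rightarrow> vec2"
  assumes root_system: "root_system R" and alcove: "alcove R A0" and p0_in_A0: "p0 \<in> A0"
    and simple_root: "j \<in> {0,1,2} \<Longrightarrow> \<rho> j \<in> R"
    and s_eq_refl: "j \<in> {0,1,2} \<Longrightarrow> s j = refl (\<rho> j) (\<kappa> j)"
    and wall_simple: "j \<in> {0,1,2} \<Longrightarrow> wall R A0 (hyp (\<rho> j) (\<kappa> j))"
begin

lemma finite_roots: "finite R"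
  using root_system by (simp add: root_system_def)

lemma root_nonzero: "\<alpha> \<in> R \<Longrightarrow> \<alpha> \<noteq> 0"
  using root_system by (auto simp: root_system_def)

lemma root_reflect: "\<alpha> \<in> R \<Longrightarrow> \<beta> \<in> R \<Longrightarrow> \<beta> - cartan \<beta> \<alpha> *\<^sub>R \<alpha> \<in> R"
  using root_system by (simp add: root_system_def cartan_def)

lemma cartan_integer: "\<alpha> \<in> R \<Longrightarrow> \<beta> \<in> R \<Longrightarrow> cartan \<beta> \<alpha> \<in> \<int>"
  using root_system by (simp add: root_system_def cartan_def)

lemma root_multiple: "\<alpha> \<in> R \<Longrightarrow> c *\<^sub>R \<alpha> \<in> R \<Longrightarrow> c = 1 \<or> c = -1"
  using root_system by (simp add: root_system_def)

lemma uminus_root: "\<alpha> \<in> R \<Longrightarrow> - \<alpha> \<in> R"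
  using root_reflect[of \<alpha> \<alpha>] root_nonzero[of \<alpha>] by (simp add: scaleR_2 cartan_def)

lemma s_s: "j \<in> {0,1,2} \<Longrightarrow> s j (s j x) = x"
  using s_eq_refl refl_refl root_nonzero simple_root by metis

lemma s_comp_s: "j \<in> {0,1,2} \<Longrightarrow> s j \<circ> s j = id"
  using s_s by auto

definition W :: "(vec2 \<Rightarrow> vec2) set" where
  "W = {word s js | js. set js \<subseteq> {0,1,2}}"

lemma word_in_W: "set js \<subseteq> {0,1,2} \<Longrightarrow> word s js \<in> W"
  unfolding W_def by blast

lemma s_in_W: "j \<in> {0,1,2} \<Longrightarrow> s j \<in> W"
  using word_in_W[of "[j]"] by simp

lemma W_comp:
  assumes "u \<in> W" "v \<in> W"
  shows "u \<circ> v \<in> W"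
proof -
  obtain xs ys where "u = word s xs" "set xs \<subseteq> {0,1,2}" "v = word s ys" "set ys \<subseteq> {0,1,2}"
    using assms unfolding W_def by blast
  then show ?thesis using word_in_W[of "xs @ ys"] by (simp add: word_append)
qed

lemma word_rev_inverse:
  "set js \<subseteq> {0,1,2} \<Longrightarrow> word s (rev js) \<circ> word s js = id \<and> word s js \<circ> word s (rev js) = id"
proof (induction js)
  case (Cons j js)
  then have sj: "s j \<circ> s j = id" and IH: "word s (rev js) \<circ> word s js = id" "word s js \<circ> word s (rev js) = id"
    by (simp_all only: s_comp_s set_simps insert_subset simp_thms)
  have "word s (rev (j # js)) \<circ> word s (j # js) = word s (rev js) \<circ> (s j \<circ> s j) \<circ> word s js"
    "word s (j # js) \<circ> word s (rev (j # js)) = s j \<circ> (word s js \<circ> word s (rev js)) \<circ> s j"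
    by (simp_all add: word_append comp_assoc)
  then show ?case by (simp only: sj IH comp_id id_comp)
qed simp

lemma W_inverse:
  assumes "u \<in> W"
  obtains v where "v \<in> W" "v \<circ> u = id" "u \<circ> v = id"
proof -
  obtain js where "u = word s js" "set js \<subseteq> {0,1,2}" using assms unfolding W_def by blast
  then show ?thesis using that[of "word s (rev js)"] word_rev_inverse word_in_W[of "rev js"] by simp
qed

lemma W_bij: "u \<in> W \<Longrightarrow> bij u"
  using W_inverse o_bij by metis

lemma refl_pullback:
  assumes "\<beta> \<in> R" "\<gamma> \<in> R"
  shows "\<exists>\<gamma>'\<in>R. \<exists>m'::int. \<forall>x. refl \<beta> k x \<bullet> \<gamma> - of_int m = x \<bullet> \<gamma>' - of_int m'"
proof -
  obtain z where z: "cartan \<gamma> \<beta> = of_int z"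
    using cartan_integer[OF assms] by (metis Ints_cases)
  show ?thesis
    using inner_refl[of \<beta> k _ \<gamma> m] z root_reflect[OF assms]
    by (intro bexI[of _ "\<gamma> - cartan \<gamma> \<beta> *\<^sub>R \<beta>"] exI[of _ "m - k * z"]) auto
qed

lemma W_pullback:
  assumes "u \<in> W" "\<gamma> \<in> R"
  obtains \<gamma>' m' where "\<gamma>' \<in> R" "\<And>x. u x \<bullet> \<gamma> - of_int m = x \<bullet> \<gamma>' - of_int m'"
proof -
  obtain js where js: "u = word s js" "set js \<subseteq> {0,1,2}" using assms(1) unfolding W_def by blast
  have "\<exists>\<gamma>'\<in>R. \<exists>m'::int. \<forall>x. word s js x \<bullet> \<gamma> - of_int m = x \<bullet> \<gamma>' - of_int m'"
    using js(2) assms(2)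
  proof (induction js arbitrary: \<gamma> m)
    case (Cons j js)
    then have j: "j \<in> {0,1,2}" and js: "set js \<subseteq> {0,1,2}" by auto
    obtain \<gamma>1 m1 where g1: "\<gamma>1 \<in> R" "\<forall>y. s j y \<bullet> \<gamma> - of_int m = y \<bullet> \<gamma>1 - of_int m1"
      using refl_pullback[OF simple_root[OF j] Cons.prems(2)] s_eq_refl[OF j] by metis
    obtain \<gamma>2 m2 where g2: "\<gamma>2 \<in> R" "\<forall>x. word s js x \<bullet> \<gamma>1 - of_int m1 = x \<bullet> \<gamma>2 - of_int m2"
      using Cons.IH[OF js g1(1)] by blast
    show ?case using g1(2) g2 by (intro bexI[of _ \<gamma>2] exI[of _ m2]) simp_all
  qed auto
  then show ?thesis using that js(1) by blast
qed

lemma W_vimage_hyperplane: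
  assumes "u \<in> W" "H \<in> hyperplanes R"
  shows "u -` H \<in> hyperplanes R"
proof -
  obtain \<gamma> m where H: "\<gamma> \<in> R" "H = hyp \<gamma> m" using assms(2) unfolding hyperplanes_def by blast
  obtain \<gamma>' m' where g: "\<gamma>' \<in> R" "\<And>x. u x \<bullet> \<gamma> - of_int m = x \<bullet> \<gamma>' - of_int m'"
    using W_pullback[OF assms(1) H(1)] by blast
  have "u -` H = hyp \<gamma>' m'" unfolding H(2) by (rule vimage_hyp_eq[OF g(2)])
  with g(1) show ?thesis unfolding hyperplanes_def by blast
qed

lemma W_image_hyperplane:
  assumes "u \<in> W" "H \<in> hyperplanes R"
  shows "u ` H \<in> hyperplanes R"
proof -
  obtain v where v: "v \<in> W" "v \<circ> u = id" "u \<circ> v = id" using W_inverse[OF assms(1)] by blast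
  have "u ` H = v -` H"
  proof (intro set_eqI iffI)
    fix x assume "x \<in> v -` H"
    then have "u (v x) \<in> u ` H" by blast
    then show "x \<in> u ` H" using v(3) by (simp add: fun_eq_iff)
  qed (use v(2) in \<open>auto simp: fun_eq_iff\<close>)
  then show ?thesis using W_vimage_hyperplane[OF v(1) assms(2)] by simp
qed

lemma separates_W_iff:
  assumes "u \<in> W" "H \<in> hyperplanes R"
  shows "separates H (u x) (u y) \<longleftrightarrow> separates (u -` H) x y"
proof -
  obtain \<gamma> m where H: "\<gamma> \<in> R" "H = hyp \<gamma> m" using assms(2) unfolding hyperplanes_def by blast
  obtain \<gamma>' m' where g: "\<gamma>' \<in> R" "\<And>x. u x \<bullet> \<gamma> - of_int m = x \<bullet> \<gamma>' - of_int m'"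
    using W_pullback[OF assms(1) H(1)] by blast
  show ?thesis
    unfolding H(2) vimage_hyp_eq[OF g(2)] using H(1) g root_nonzero by (simp add: separates_hyp_iff)
qed

lemma refl_conj_root:
  assumes "\<delta> \<in> R" "\<gamma> \<in> R"
  obtains \<gamma>' m' where "\<gamma>' \<in> R" "refl \<delta> e \<circ> refl \<gamma> m = refl \<gamma>' m' \<circ> refl \<delta> e"
    "refl \<delta> e ` hyp \<gamma> m = hyp \<gamma>' m'"
proof -
  obtain z where z: "cartan \<gamma> \<delta> = of_int z"
    using cartan_integer[OF assms] by (metis Ints_cases)
  define \<gamma>' where "\<gamma>' = \<gamma> - cartan \<gamma> \<delta> *\<^sub>R \<delta>"
  have "refl \<delta> e (refl \<gamma> m v) = refl \<gamma>' (m - e * z) (refl \<delta> e v)" for v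
    unfolding \<gamma>'_def using refl_conj_refl[OF root_nonzero[OF assms(1)] root_nonzero[OF assms(2)]] z
    by simp
  moreover have "refl \<delta> e x \<bullet> \<gamma> - of_int m = x \<bullet> \<gamma>' - of_int (m - e * z)" for x
    using inner_refl[of \<delta> e x \<gamma> m] z unfolding \<gamma>'_def by simp
  ultimately show ?thesis
    using that[of \<gamma>' "m - e * z"] root_reflect[OF assms] vimage_hyp_eq
    by (simp add: refl_image_eq_vimage[OF root_nonzero[OF assms(1)]] \<gamma>'_def fun_eq_iff)
qed

lemma word_conj_refl:
  assumes "set js \<subseteq> {0,1,2}" "\<beta> \<in> R"
  shows "\<exists>\<gamma>\<in>R. \<exists>m. word s js \<circ> refl \<beta> k = refl \<gamma> m \<circ> word s js \<and> word s js ` hyp \<beta> k = hyp \<gamma> m"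
  using assms(1)
proof (induction js)
  case Nil
  show ?case using assms(2) by auto
next
  case (Cons j js)
  then have j: "j \<in> {0,1,2}" and js: "set js \<subseteq> {0,1,2}" by auto
  obtain \<gamma> m where gm: "\<gamma> \<in> R" "word s js \<circ> refl \<beta> k = refl \<gamma> m \<circ> word s js"
    "word s js ` hyp \<beta> k = hyp \<gamma> m"
    using Cons.IH[OF js] by blast
  obtain \<gamma>' m' where g': "\<gamma>' \<in> R" "s j \<circ> refl \<gamma> m = refl \<gamma>' m' \<circ> s j" "s j ` hyp \<gamma> m = hyp \<gamma>' m'"
    using refl_conj_root[OF simple_root[OF j] gm(1)] s_eq_refl[OF j] by metis
  have "word s (j # js) \<circ> refl \<beta> k = refl \<gamma>' m' \<circ> word s (j # js)"
    using gm(2) g'(2) by (simp add: comp_assoc) (metis comp_assoc)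
  moreover have "word s (j # js) ` hyp \<beta> k = hyp \<gamma>' m'"
    unfolding word_Cons image_comp[symmetric] gm(3) g'(3) ..
  ultimately show ?case using g'(1) by blast
qed

section \<open>Separating hyperplanes and length\<close>

lemma A0_not_in_hyperplane: "x \<in> A0 \<Longrightarrow> H \<in> hyperplanes R \<Longrightarrow> x \<notin> H"
  using alcove in_components_subset unfolding alcove_def by blast

lemma A0_not_in_hyp: "x \<in> A0 \<Longrightarrow> \<gamma> \<in> R \<Longrightarrow> x \<bullet> \<gamma> \<noteq> of_int m"
  using A0_not_in_hyperplane[of x "hyp \<gamma> m"] unfolding hyperplanes_def hyp_def by blast

lemma A0_same_side:
  assumes "\<gamma> \<in> R" "x \<in> A0"
  shows "(x \<bullet> \<gamma> - of_int m) * (p0 \<bullet> \<gamma> - of_int m) > 0"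
proof (rule ccontr)
  assume "\<not> ?thesis"
  then have "(x \<bullet> \<gamma> - of_int m) * (p0 \<bullet> \<gamma> - of_int m) \<le> 0" by simp
  moreover have "x \<bullet> \<gamma> \<noteq> of_int m" "p0 \<bullet> \<gamma> \<noteq> of_int m"
    using A0_not_in_hyp assms p0_in_A0 by blast+
  ultimately have "(\<gamma> \<bullet> x \<le> of_int m \<and> of_int m \<le> \<gamma> \<bullet> p0) \<or> (\<gamma> \<bullet> p0 \<le> of_int m \<and> of_int m \<le> \<gamma> \<bullet> x)"
    by (auto simp: inner_commute mult_le_0_iff)
  moreover have conn: "connected A0" using alcove in_components_connected unfolding alcove_def by blast
  ultimately obtain z where "z \<in> A0" "\<gamma> \<bullet> z = of_int m"
    using connected_ivt_hyperplane[OF conn assms(2) p0_in_A0] connected_ivt_hyperplane[OF conn p0_in_A0 assms(2)]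
    by blast
  then show False using A0_not_in_hyp[of z \<gamma> m] assms(1) by (simp add: inner_commute)
qed

lemma closure_A0_same_side:
  assumes "\<gamma> \<in> R" "y \<in> closure A0"
  shows "(y \<bullet> \<gamma> - of_int m) * (p0 \<bullet> \<gamma> - of_int m) \<ge> 0"
proof (cases "p0 \<bullet> \<gamma> > of_int m")
  case True
  have "A0 \<subseteq> {x. \<gamma> \<bullet> x \<ge> of_int m}"
  proof
    fix x assume "x \<in> A0"
    then have "(x \<bullet> \<gamma> - of_int m) * (p0 \<bullet> \<gamma> - of_int m) > 0" by (rule A0_same_side[OF assms(1)])
    with True show "x \<in> {x. \<gamma> \<bullet> x \<ge> of_int m}" by (simp add: inner_commute zero_less_mult_iff)
  qed
  then have "closure A0 \<subseteq> {x. \<gamma> \<bullet> x \<ge> of_int m}"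
    by (rule closure_minimal) (rule closed_halfspace_ge)
  then show ?thesis using assms(2) True by (auto simp: inner_commute)
next
  case False
  then have "p0 \<bullet> \<gamma> < of_int m" using A0_not_in_hyp[OF p0_in_A0 assms(1), of m] by linarith
  have "A0 \<subseteq> {x. \<gamma> \<bullet> x \<le> of_int m}"
  proof
    fix x assume "x \<in> A0"
    then have "(x \<bullet> \<gamma> - of_int m) * (p0 \<bullet> \<gamma> - of_int m) > 0" by (rule A0_same_side[OF assms(1)])
    with \<open>p0 \<bullet> \<gamma> < of_int m\<close> show "x \<in> {x. \<gamma> \<bullet> x \<le> of_int m}"
      by (simp add: inner_commute zero_less_mult_iff)
  qed
  then have "closure A0 \<subseteq> {x. \<gamma> \<bullet> x \<le> of_int m}"
    by (rule closure_minimal) (rule closed_halfspace_le)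
  then show ?thesis using assms(2) \<open>p0 \<bullet> \<gamma> < of_int m\<close> by (auto simp: inner_commute mult_nonpos_nonpos)
qed

lemma W_closure_same_side:
  assumes "u \<in> W" "\<gamma> \<in> R" "y \<in> closure A0"
  shows "(u y \<bullet> \<gamma> - of_int m) * (u p0 \<bullet> \<gamma> - of_int m) \<ge> 0"
proof -
  obtain \<gamma>' m' where "\<gamma>' \<in> R" "\<And>x. u x \<bullet> \<gamma> - of_int m = x \<bullet> \<gamma>' - of_int m'"
    using W_pullback[OF assms(1,2)] by blast
  then show ?thesis using closure_A0_same_side[OF _ assms(3)] by simp
qed

lemma W_A0_not_in_hyperplane:
  assumes "u \<in> W" "x \<in> A0" "H \<in> hyperplanes R"
  shows "u x \<notin> H"
  using W_vimage_hyperplane[OF assms(1,3)] A0_not_in_hyp[OF assms(2)]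
  unfolding hyperplanes_def hyp_def by blast

lemma W_A0_not_in_hyp:
  assumes "u \<in> W" "x \<in> A0" "\<gamma> \<in> R"
  shows "u x \<bullet> \<gamma> \<noteq> of_int m"
  using W_A0_not_in_hyperplane[OF assms(1,2), of "hyp \<gamma> m"] assms(3)
  unfolding hyperplanes_def hyp_def by blast

lemma separates_trans_iff:
  assumes "H \<in> hyperplanes R" "x \<notin> H" "y \<notin> H" "z \<notin> H"
  shows "separates H x z \<longleftrightarrow> (separates H x y \<noteq> separates H y z)"
proof -
  obtain \<gamma> m where H: "\<gamma> \<in> R" "H = hyp \<gamma> m" using assms(1) unfolding hyperplanes_def by blast
  have "x \<bullet> \<gamma> - of_int m \<noteq> 0" "y \<bullet> \<gamma> - of_int m \<noteq> 0" "z \<bullet> \<gamma> - of_int m \<noteq> 0"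
    using assms(2-4) H(2) unfolding hyp_def by auto
  then show ?thesis
    unfolding H(2) separates_hyp_iff[OF root_nonzero[OF H(1)]] by (rule mult_less_0_iff_xor)
qed

definition simple_wall :: "nat \<Rightarrow> vec2 set" where
  "simple_wall j = hyp (\<rho> j) (\<kappa> j)"

lemma simple_wall_hyperplane: "j \<in> {0,1,2} \<Longrightarrow> simple_wall j \<in> hyperplanes R"
  using simple_root unfolding simple_wall_def hyperplanes_def by blast

text \<open>The edge of the wall lies in the closures of both \<open>A0\<close> and \<open>s j A0\<close>, so every
  hyperplane separating the two alcoves contains it.\<close>
lemma separates_p0_s_p0_iff:
  assumes j: "j \<in> {0,1,2}" and H: "H \<in> hyperplanes R"
  shows "separates H p0 (s j p0) \<longleftrightarrow> H = simple_wall j"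
proof
  assume sep: "separates H p0 (s j p0)"
  obtain \<gamma> m where Hg: "\<gamma> \<in> R" "H = hyp \<gamma> m" using H unfolding hyperplanes_def by blast
  have neg: "(p0 \<bullet> \<gamma> - of_int m) * (s j p0 \<bullet> \<gamma> - of_int m) < 0"
    using sep unfolding Hg(2) separates_hyp_iff[OF root_nonzero[OF Hg(1)]] .
  obtain p q where pq: "p \<noteq> q" "p \<in> simple_wall j" "p \<in> closure A0" "q \<in> simple_wall j" "q \<in> closure A0"
    using wall_simple[OF j] unfolding wall_def simple_wall_def by blast
  have on_H: "r \<in> H" if r: "r \<in> simple_wall j" "r \<in> closure A0" for r
  proof -
    have "s j r = r" using refl_fixes_hyp r(1) s_eq_refl[OF j] unfolding simple_wall_def by simp
    then have "(r \<bullet> \<gamma> - of_int m) * (s j p0 \<bullet> \<gamma> - of_int m) \<ge> 0"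
      using W_closure_same_side[OF s_in_W[OF j] Hg(1) r(2)] by simp
    moreover have "(r \<bullet> \<gamma> - of_int m) * (p0 \<bullet> \<gamma> - of_int m) \<ge> 0"
      using closure_A0_same_side[OF Hg(1) r(2)] .
    ultimately have "r \<bullet> \<gamma> - of_int m = 0" using neg
      by (smt (verit, best) mult_le_0_iff mult_less_0_iff zero_le_mult_iff)
    then show ?thesis using Hg(2) by (simp add: hyp_def)
  qed
  then show "H = simple_wall j"
    using hyp_common_points_imp_scaled[OF root_nonzero[OF simple_root[OF j]] root_nonzero[OF Hg(1)] pq(1)]
      pq hyp_scaleR Hg(2) unfolding simple_wall_def by metis
next
  assume "H = simple_wall j"
  have "p0 \<bullet> \<rho> j \<noteq> of_int (\<kappa> j)" using A0_not_in_hyp[OF p0_in_A0 simple_root[OF j]] .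
  then have "(p0 \<bullet> \<rho> j - of_int (\<kappa> j)) * (s j p0 \<bullet> \<rho> j - of_int (\<kappa> j)) < 0"
    unfolding s_eq_refl[OF j] inner_refl_self[OF root_nonzero[OF simple_root[OF j]]]
    by (simp add: mult_less_0_iff) (smt (verit))
  then show "separates H p0 (s j p0)"
    unfolding \<open>H = simple_wall j\<close> simple_wall_def separates_hyp_iff[OF root_nonzero[OF simple_root[OF j]]] .
qed

definition separating_hyps :: "(vec2 \<Rightarrow> vec2) \<Rightarrow> vec2 set set" where
  "separating_hyps u = {H \<in> hyperplanes R. separates H p0 (u p0)}"

lemma separating_hyps_id: "separating_hyps id = {}"
  unfolding separating_hyps_def separates_def by (auto simp: mult_less_0_iff)

lemma finite_separating_hyps: "finite (separating_hyps u)"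
proof -
  define B where "B \<gamma> = \<bar>p0 \<bullet> \<gamma>\<bar> + \<bar>u p0 \<bullet> \<gamma>\<bar>" for \<gamma>
  have "separating_hyps u \<subseteq> (\<lambda>(\<gamma>, m). hyp \<gamma> m) ` (SIGMA \<gamma>:R. {m. \<bar>of_int m\<bar> \<le> B \<gamma>})"
  proof
    fix H assume H: "H \<in> separating_hyps u"
    then obtain \<gamma> m where Hg: "\<gamma> \<in> R" "H = hyp \<gamma> m"
      unfolding separating_hyps_def hyperplanes_def by blast
    have "(p0 \<bullet> \<gamma> - of_int m) * (u p0 \<bullet> \<gamma> - of_int m) < 0"
      using H root_nonzero[OF Hg(1)] unfolding separating_hyps_def Hg(2) by (simp add: separates_hyp_iff)
    then have "\<bar>of_int m\<bar> \<le> B \<gamma>" unfolding B_def by (auto simp: mult_less_0_iff)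
    then show "H \<in> (\<lambda>(\<gamma>, m). hyp \<gamma> m) ` (SIGMA \<gamma>:R. {m. \<bar>of_int m\<bar> \<le> B \<gamma>})"
      using Hg by force
  qed
  moreover have "finite {m::int. \<bar>of_int m\<bar> \<le> B \<gamma>}" for \<gamma>
    by (rule finite_subset[of _ "{\<lfloor>- B \<gamma>\<rfloor>..\<lfloor>B \<gamma>\<rfloor>}"]) (auto simp: abs_le_iff le_floor_iff floor_le_iff)
  then have "finite (SIGMA \<gamma>:R. {m. \<bar>of_int m\<bar> \<le> B \<gamma>})"
    using finite_roots by blast
  ultimately show ?thesis by (rule finite_subset[OF _ finite_imageI])
qed

lemma separating_hyps_comp_s:
  assumes u: "u \<in> W" and j: "j \<in> {0,1,2}"
  shows "separating_hyps (u \<circ> s j) =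
    (if u ` simple_wall j \<in> separating_hyps u then separating_hyps u - {u ` simple_wall j}
     else insert (u ` simple_wall j) (separating_hyps u))"
proof -
  have "H \<in> separating_hyps (u \<circ> s j) \<longleftrightarrow> (H \<in> separating_hyps u) \<noteq> (H = u ` simple_wall j)"
    if H: "H \<in> hyperplanes R" for H
  proof -
    have "p0 \<notin> H" "u p0 \<notin> H" "u (s j p0) \<notin> H"
      using A0_not_in_hyperplane[OF p0_in_A0 H] W_A0_not_in_hyperplane[OF u p0_in_A0 H]
        W_A0_not_in_hyperplane[OF W_comp[OF u s_in_W[OF j]] p0_in_A0 H] by simp_all
    then have "separates H p0 (u (s j p0)) \<longleftrightarrow> (separates H p0 (u p0) \<noteq> separates H (u p0) (u (s j p0)))"
      by (rule separates_trans_iff[OF H])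
    moreover have "separates H (u p0) (u (s j p0)) \<longleftrightarrow> u -` H = simple_wall j"
      using separates_W_iff[OF u H] separates_p0_s_p0_iff[OF j W_vimage_hyperplane[OF u H]] by simp
    moreover have "u -` H = simple_wall j \<longleftrightarrow> H = u ` simple_wall j"
      using W_bij[OF u] by (metis bij_is_inj bij_is_surj inj_vimage_image_eq surj_image_vimage_eq)
    ultimately show ?thesis unfolding separating_hyps_def using H by auto
  qed
  moreover have "u ` simple_wall j \<in> hyperplanes R"
    using W_image_hyperplane[OF u simple_wall_hyperplane[OF j]] .
  moreover have "separating_hyps v \<subseteq> hyperplanes R" for v
    unfolding separating_hyps_def by blast
  ultimately show ?thesis by (auto 4 3)
qed

text \<open>The wall crossed between the alcoves \<open>word s (take a js) A0\<close> and
  \<open>word s (take (a + 1) js) A0\<close> of the gallery of \<open>js\<close>.\<close>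
definition crossed_wall :: "nat list \<Rightarrow> nat \<Rightarrow> vec2 set" where
  "crossed_wall js a = word s (take a js) ` simple_wall (js ! a)"

lemma word_delete_two_letters:
  assumes js: "set js \<subseteq> {0,1,2}" and ac: "a < c" "c < length js"
    and eq: "crossed_wall js a = crossed_wall js c"
  shows "word s js = word s (take a js @ take (c - a - 1) (drop (a + 1) js) @ drop (c + 1) js)"
proof -
  have "a < length js" using ac by simp
  then have ja: "js ! a \<in> {0,1,2}" using js nth_mem by blast
  have jc: "js ! c \<in> {0,1,2}" using js ac(2) nth_mem by blast
  have ta: "set (take a js) \<subseteq> {0,1,2}" and tc: "set (take c js) \<subseteq> {0,1,2}"
    using js by (meson order_trans set_take_subset)+
  obtain \<gamma>a ma where A: "\<gamma>a \<in> R"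
      "word s (take a js) \<circ> refl (\<rho> (js ! a)) (\<kappa> (js ! a)) = refl \<gamma>a ma \<circ> word s (take a js)"
      "word s (take a js) ` hyp (\<rho> (js ! a)) (\<kappa> (js ! a)) = hyp \<gamma>a ma"
    using word_conj_refl[OF ta simple_root[OF ja]] by blast
  obtain \<gamma>c mc where C: "\<gamma>c \<in> R"
      "word s (take c js) \<circ> refl (\<rho> (js ! c)) (\<kappa> (js ! c)) = refl \<gamma>c mc \<circ> word s (take c js)"
      "word s (take c js) ` hyp (\<rho> (js ! c)) (\<kappa> (js ! c)) = hyp \<gamma>c mc"
    using word_conj_refl[OF tc simple_root[OF jc]] by blast
  have "hyp \<gamma>a ma = hyp \<gamma>c mc"
    using eq A(3) C(3) unfolding crossed_wall_def simple_wall_def by simp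
  then have r: "refl \<gamma>c mc = refl \<gamma>a ma"
    using refl_eq_if_hyp_eq[OF root_nonzero[OF A(1)] root_nonzero[OF C(1)]] by blast
  define pre where "pre = word s (take a js)"
  define mid where "mid = word s (take (c - a - 1) (drop (a + 1) js))"
  define post where "post = word s (drop (c + 1) js)"
  have prefix: "word s (take c js) = pre \<circ> s (js ! a) \<circ> mid"
    unfolding pre_def mid_def using take_eq_take_nth_take_drop[OF ac(1) less_imp_le[OF ac(2)]]
    by (metis append_Cons append_Nil word_Cons word_append comp_assoc)
  have whole: "word s js = word s (take c js) \<circ> s (js ! c) \<circ> post"
    unfolding post_def by (subst id_take_nth_drop[OF ac(2)]) (simp add: word_append comp_assoc)
  have "word s (take c js) \<circ> s (js ! c) = refl \<gamma>a ma \<circ> word s (take c js)"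
    using C(2) r s_eq_refl[OF jc] by simp
  also have "\<dots> = (refl \<gamma>a ma \<circ> pre) \<circ> s (js ! a) \<circ> mid"
    unfolding prefix by (simp add: comp_assoc)
  also have "\<dots> = (pre \<circ> s (js ! a)) \<circ> s (js ! a) \<circ> mid"
    using A(2) s_eq_refl[OF ja] unfolding pre_def by simp
  also have "\<dots> = pre \<circ> mid"
    using s_comp_s[OF ja] by (simp add: comp_assoc)
  finally have "word s js = pre \<circ> mid \<circ> post"
    using whole by simp
  then show ?thesis
    unfolding pre_def mid_def post_def by (simp add: word_append comp_assoc)
qed

lemma separating_hyps_word_take:
  assumes js: "set js \<subseteq> {0,1,2}" and d: "distinct (map (crossed_wall js) [0..<length js])"
    and "a \<le> length js"
  shows "separating_hyps (word s (take a js)) = crossed_wall js ` {0..<a}"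
  using assms(3)
proof (induction a)
  case 0
  then show ?case using separating_hyps_id by (simp add: id_def)
next
  case (Suc a)
  then have a: "a < length js" by simp
  then have ja: "js ! a \<in> {0,1,2}" using js nth_mem by blast
  have ta: "set (take a js) \<subseteq> {0,1,2}" using js by (meson order_trans set_take_subset)
  have w: "word s (take (Suc a) js) = word s (take a js) \<circ> s (js ! a)"
    using a by (simp add: take_Suc_conv_app_nth word_append)
  have "crossed_wall js a \<notin> crossed_wall js ` {0..<a}"
    using d a by (auto simp: distinct_conv_nth)
  then have "separating_hyps (word s (take (Suc a) js)) = insert (crossed_wall js a) (crossed_wall js ` {0..<a})"
    unfolding w separating_hyps_comp_s[OF word_in_W[OF ta] ja] using Suc
    by (simp add: crossed_wall_def)
  then show ?case by (simp add: atLeast0_lessThan_Suc)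
qed

lemma card_separating_hyps_or_shorter:
  assumes js: "set js \<subseteq> {0,1,2}"
  shows "card (separating_hyps (word s js)) = length js \<or>
         (\<exists>js'. set js' \<subseteq> {0,1,2} \<and> length js' < length js \<and> word s js' = word s js)"
proof (cases "distinct (map (crossed_wall js) [0..<length js])")
  case True
  then have "card (crossed_wall js ` {0..<length js}) = length js"
    by (simp add: distinct_map card_image)
  then show ?thesis using separating_hyps_word_take[OF js True, of "length js"] by simp
next
  case False
  then obtain a c where ac: "a < c" "c < length js" "crossed_wall js a = crossed_wall js c"
    by (auto simp: distinct_conv_nth) (metis linorder_neqE_nat)
  define js' where "js' = take a js @ take (c - a - 1) (drop (a + 1) js) @ drop (c + 1) js"
  have "word s js' = word s js" unfolding js'_def using word_delete_two_letters[OF js ac] ..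
  moreover have "length js' < length js" unfolding js'_def using ac by simp
  moreover have "set js' \<subseteq> {0,1,2}" unfolding js'_def using js
    by (auto dest: in_set_takeD in_set_dropD)
  ultimately show ?thesis by blast
qed

lemma len_eq_card_separating_hyps:
  assumes "u \<in> W"
  shows "len s u = card (separating_hyps u)"
proof -
  let ?P = "\<lambda>n. \<exists>js. length js = n \<and> set js \<subseteq> {0,1,2} \<and> u = word s js"
  have "?P (len s u)" unfolding len_def by (rule LeastI_ex) (use assms in \<open>auto simp: W_def\<close>)
  then obtain js where js: "length js = len s u" "set js \<subseteq> {0,1,2}" "u = word s js" by blast
  have "\<not> ?P n" if "n < len s u" for n
    using that unfolding len_def by (rule not_less_Least)
  then show ?thesis using card_separating_hyps_or_shorter[OF js(2)] js by metis
qed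

lemma len_comp_s_less_iff:
  assumes u: "u \<in> W" and j: "j \<in> {0,1,2}"
  shows "len s (u \<circ> s j) < len s u \<longleftrightarrow> u ` simple_wall j \<in> separating_hyps u"
proof -
  have "len s (u \<circ> s j) = card (separating_hyps (u \<circ> s j))"
    using len_eq_card_separating_hyps[OF W_comp[OF u s_in_W[OF j]]] .
  moreover have "u ` simple_wall j \<in> separating_hyps u \<Longrightarrow> card (separating_hyps u) > 0"
    using finite_separating_hyps card_gt_0_iff by blast
  ultimately show ?thesis
    using separating_hyps_comp_s[OF u j] finite_separating_hyps[of u] len_eq_card_separating_hyps[OF u]
    by auto
qed

lemma len_comp_s_not_in_W:
  assumes u: "u \<notin> W" and j: "j \<in> {0,1,2}"
  shows "len s (u \<circ> s j) = len s u"
proof -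
  have "u \<circ> s j \<notin> W"
    using W_comp[OF _ s_in_W[OF j], of "u \<circ> s j"] u s_comp_s[OF j] by (auto simp: comp_assoc)
  then have "(\<lambda>n. \<exists>js. length js = n \<and> set js \<subseteq> {0,1,2} \<and> u \<circ> s j = word s js) = (\<lambda>n. False)"
    and "(\<lambda>n. \<exists>js. length js = n \<and> set js \<subseteq> {0,1,2} \<and> u = word s js) = (\<lambda>n. False)"
    using u unfolding W_def by auto
  then show ?thesis unfolding len_def by simp
qed

lemma right_descent_iff_separates:
  assumes u: "u \<in> W" and q: "u q = p0" and j: "j \<in> {0,1,2}"
  shows "j \<in> right_descents s u \<longleftrightarrow> separates (simple_wall j) q p0"
proof -
  have H: "u ` simple_wall j \<in> hyperplanes R"
    using W_image_hyperplane[OF u simple_wall_hyperplane[OF j]] .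
  have "j \<in> right_descents s u \<longleftrightarrow> u ` simple_wall j \<in> separating_hyps u"
    using len_comp_s_less_iff[OF u j] j unfolding right_descents_def by blast
  also have "\<dots> \<longleftrightarrow> separates (u -` u ` simple_wall j) q p0"
    using H separates_W_iff[OF u H, of q p0] q unfolding separating_hyps_def by simp
  also have "u -` u ` simple_wall j = simple_wall j"
    using W_bij[OF u] by (simp add: bij_is_inj inj_vimage_image_eq)
  finally show ?thesis .
qed

end

section \<open>The fundamental alcove\<close>

locale fundamental_alcove = alcove_walls +
  assumes origin_in_closure: "0 \<in> closure A0"
    and affine_level: "\<kappa> 0 \<noteq> 0" and linear_levels: "\<kappa> 1 = 0" "\<kappa> 2 = 0"
    and linear_walls_distinct: "hyp (\<rho> 1) 0 \<noteq> hyp (\<rho> 2) 0"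
begin

lemma root_le_one_on_closure:
  assumes "\<delta> \<in> R" "y \<in> closure A0"
  shows "y \<bullet> \<delta> \<le> 1"
proof -
  have "(0 \<bullet> \<delta> - of_int 1) * (p0 \<bullet> \<delta> - of_int 1) \<ge> 0"
    using closure_A0_same_side[OF assms(1) origin_in_closure] .
  moreover have "p0 \<bullet> \<delta> \<noteq> 1" using A0_not_in_hyp[OF p0_in_A0 assms(1), of 1] by simp
  ultimately have "p0 \<bullet> \<delta> < 1" by (simp add: mult_le_0_iff)
  moreover have "(y \<bullet> \<delta> - of_int 1) * (p0 \<bullet> \<delta> - of_int 1) \<ge> 0"
    using closure_A0_same_side[OF assms] .
  ultimately show ?thesis by (simp add: zero_le_mult_iff)
qed

lemma positive_if_closure_point_positive:
  assumes "\<delta> \<in> R" "y \<in> closure A0" "y \<bullet> \<delta> > 0"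
  shows "p0 \<bullet> \<delta> > 0"
proof -
  have "(y \<bullet> \<delta> - of_int 0) * (p0 \<bullet> \<delta> - of_int 0) \<ge> 0"
    using closure_A0_same_side[OF assms(1,2)] .
  moreover have "p0 \<bullet> \<delta> \<noteq> 0" using A0_not_in_hyp[OF p0_in_A0 assms(1), of 0] by simp
  ultimately show ?thesis using assms(3) by (simp add: zero_le_mult_iff)
qed

lemma affine_wall_normal_form:
  obtains \<theta> where "\<theta> \<in> R" "simple_wall 0 = hyp \<theta> 1" "s 0 = refl \<theta> 1" "p0 \<bullet> \<theta> > 0"
proof -
  define \<theta> where "\<theta> = sgn (\<kappa> 0) *\<^sub>R \<rho> 0"
  define m where "m = \<bar>\<kappa> 0\<bar>"
  have "\<theta> \<in> R" "simple_wall 0 = hyp \<theta> m" "s 0 = refl \<theta> m" "m > 0"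
    using affine_level simple_root[of 0] uminus_root[of "\<rho> 0"] s_eq_refl[of 0]
      hyp_uminus[of "\<rho> 0" "\<kappa> 0"] refl_uminus[of "\<rho> 0" "\<kappa> 0"]
    unfolding \<theta>_def m_def simple_wall_def by (auto simp: sgn_if)
  moreover obtain r where r: "r \<in> simple_wall 0" "r \<in> closure A0"
    using wall_simple[of 0] unfolding wall_def simple_wall_def by blast
  ultimately have "r \<bullet> \<theta> = of_int m" "of_int m > (0::real)" by (simp_all add: hyp_def)
  moreover have "r \<bullet> \<theta> \<le> 1" using root_le_one_on_closure[OF \<open>\<theta> \<in> R\<close> r(2)] .
  ultimately have "m = 1" "p0 \<bullet> \<theta> > 0"
    using positive_if_closure_point_positive[OF \<open>\<theta> \<in> R\<close> r(2)] \<open>m > 0\<close> by simp_all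
  then show ?thesis using that \<open>\<theta> \<in> R\<close> \<open>simple_wall 0 = hyp \<theta> m\<close> \<open>s 0 = refl \<theta> m\<close> by simp
qed

lemma strip_positive_root:
  assumes u: "u \<in> W" and q: "u q = p0" and \<alpha>: "\<alpha> \<in> R"
    and strip: "u ` A0 \<subseteq> strip \<alpha> c" "A0 \<subseteq> strip \<alpha> c"
  obtains \<alpha>0 where "\<alpha>0 \<in> R" "p0 \<bullet> \<alpha>0 > 0" "0 < q \<bullet> \<alpha>0" "q \<bullet> \<alpha>0 < 1"
proof -
  obtain \<alpha>' c' where \<alpha>': "\<alpha>' \<in> R" "\<And>y. u y \<bullet> \<alpha> - of_int c = y \<bullet> \<alpha>' - of_int c'"
    using W_pullback[OF u \<alpha>] by blast
  have "u p0 \<in> strip \<alpha> c" "u q \<in> strip \<alpha> c" using strip p0_in_A0 q by auto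
  then have p0: "0 < p0 \<bullet> \<alpha>' - of_int c'" "p0 \<bullet> \<alpha>' - of_int c' < 1"
    and q': "0 < q \<bullet> \<alpha>' - of_int c'" "q \<bullet> \<alpha>' - of_int c' < 1"
    unfolding strip_def using \<alpha>'(2)[of p0] \<alpha>'(2)[of q] by auto
  have "(0 \<bullet> \<alpha>' - of_int c') * (p0 \<bullet> \<alpha>' - of_int c') \<ge> 0"
    "(0 \<bullet> \<alpha>' - of_int (c' + 1)) * (p0 \<bullet> \<alpha>' - of_int (c' + 1)) \<ge> 0"
    using closure_A0_same_side[OF \<alpha>'(1) origin_in_closure] by blast+
  then have "c' \<le> 0" "c' \<ge> -1" using p0 by (auto simp: mult_le_0_iff zero_le_mult_iff)
  then consider "c' = 0" | "c' = -1" by linarith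
  then show ?thesis
  proof cases
    case 1
    then show ?thesis using that[of \<alpha>'] \<alpha>'(1) p0 q' by simp
  next
    case 2
    then show ?thesis using that[of "- \<alpha>'"] uminus_root[OF \<alpha>'(1)] p0 q' by (simp add: inner_minus_right)
  qed
qed

lemma W0_subset_W: "W0 s \<subseteq> W"
  unfolding W0_def W_def by auto

lemma W0_fixes_origin: "v \<in> W0 s \<Longrightarrow> v 0 = 0"
proof -
  have "set js \<subseteq> {1,2} \<Longrightarrow> word s js 0 = 0" for js
  proof (induction js)
    case (Cons j js)
    then have "s j = refl (\<rho> j) 0" using s_eq_refl linear_levels by auto
    with Cons show ?case by (simp add: refl_def)
  qed simp
  then show "v \<in> W0 s \<Longrightarrow> v 0 = 0" unfolding W0_def by blast
qed

text \<open>A hyperplane separating \<open>q\<close> from \<open>s j p0\<close> cannot pass through the origin, since both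
  lie in the same Weyl chamber; as \<open>s j A0\<close> and \<open>v A0\<close> both have the origin in their
  closure, it then also separates \<open>q\<close> from \<open>v p0\<close>.\<close>
lemma separating_hyps_comp_s_subset:
  assumes w: "w \<in> W" and q: "w q = p0" and j: "j \<in> {1,2}" and v: "v \<in> W0 s"
    and same_chamber: "\<And>\<delta>. \<delta> \<in> R \<Longrightarrow> (q \<bullet> \<delta>) * (s j p0 \<bullet> \<delta>) \<ge> 0"
  shows "separating_hyps (w \<circ> s j) \<subseteq> separating_hyps (w \<circ> v)"
proof
  fix H assume H: "H \<in> separating_hyps (w \<circ> s j)"
  then have HR: "H \<in> hyperplanes R" and sep: "separates H p0 (w (s j p0))"
    unfolding separating_hyps_def by auto
  obtain \<gamma> m where Hg: "\<gamma> \<in> R" "H = hyp \<gamma> m" using HR unfolding hyperplanes_def by blast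
  obtain \<gamma>' m' where \<gamma>': "\<gamma>' \<in> R" "\<And>y. w y \<bullet> \<gamma> - of_int m = y \<bullet> \<gamma>' - of_int m'"
    using W_pullback[OF w Hg(1)] by blast
  have sj: "s j \<in> W" "s j 0 = 0"
    using s_in_W s_eq_refl linear_levels j by (auto simp: refl_def)
  have vW: "v \<in> W" "v 0 = 0" using v W0_subset_W W0_fixes_origin by auto
  have p0_\<gamma>: "p0 \<bullet> \<gamma> - of_int m = q \<bullet> \<gamma>' - of_int m'" using \<gamma>'(2)[of q] q by simp
  have neg: "(q \<bullet> \<gamma>' - of_int m') * (s j p0 \<bullet> \<gamma>' - of_int m') < 0"
    using sep \<gamma>'(2)[of "s j p0"]
    unfolding Hg(2) separates_hyp_iff[OF root_nonzero[OF Hg(1)]] p0_\<gamma> by simp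
  then have "m' \<noteq> 0" using same_chamber[OF \<gamma>'(1)] by auto
  moreover have "(- of_int m') * (s j p0 \<bullet> \<gamma>' - of_int m') \<ge> 0"
    "(- of_int m') * (v p0 \<bullet> \<gamma>' - of_int m') \<ge> 0"
    using W_closure_same_side[OF sj(1) \<gamma>'(1) origin_in_closure, of m']
      W_closure_same_side[OF vW(1) \<gamma>'(1) origin_in_closure, of m'] sj(2) vW(2) by simp_all
  moreover have "s j p0 \<bullet> \<gamma>' \<noteq> of_int m'" "v p0 \<bullet> \<gamma>' \<noteq> of_int m'"
    using W_A0_not_in_hyp[OF _ p0_in_A0 \<gamma>'(1)] sj(1) vW(1) by blast+
  ultimately have "(q \<bullet> \<gamma>' - of_int m') * (v p0 \<bullet> \<gamma>' - of_int m') < 0"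
    using neg by (auto simp: mult_less_0_iff mult_le_0_iff zero_le_mult_iff)
  then have "separates H p0 ((w \<circ> v) p0)"
    using \<gamma>'(2)[of "v p0"] unfolding Hg(2) separates_hyp_iff[OF root_nonzero[OF Hg(1)]] p0_\<gamma> by simp
  then show "H \<in> separating_hyps (w \<circ> v)" unfolding separating_hyps_def using HR by simp
qed

end

section \<open>Root systems of rank 2\<close>

definition rank2_cartan :: "int \<Rightarrow> int \<Rightarrow> bool" where
  "rank2_cartan x y \<longleftrightarrow> (x, y) \<in> {(-1, -1), (-1, -2), (-2, -1), (-1, -3), (-3, -1)}"

text \<open>Coordinates, with respect to simple roots \<open>e\<close>, \<open>f\<close>, of the positive roots of the
  rank 2 root system (\<open>A2\<close>, \<open>B2\<close> or \<open>G2\<close>) whose Cartan integers are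
  \<open>x = 2 (f \<bullet> e) / (e \<bullet> e)\<close> and \<open>y = 2 (e \<bullet> f) / (f \<bullet> f)\<close>.\<close>
definition positive_root_coords :: "int \<Rightarrow> int \<Rightarrow> (real \<times> real) set" where
  "positive_root_coords x y =
    (if (x, y) = (-1, -1) then {(1, 0), (0, 1), (1, 1)}
     else if (x, y) = (-1, -2) then {(1, 0), (0, 1), (1, 1), (1, 2)}
     else if (x, y) = (-2, -1) then {(1, 0), (0, 1), (1, 1), (2, 1)}
     else if (x, y) = (-1, -3) then {(1, 0), (0, 1), (1, 1), (1, 2), (1, 3), (2, 3)}
     else {(1, 0), (0, 1), (1, 1), (2, 1), (3, 1), (3, 2)})"

definition highest_root_coords :: "int \<Rightarrow> int \<Rightarrow> real \<times> real" where
  "highest_root_coords x y =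
    (if (x, y) = (-1, -1) then (1, 1)
     else if (x, y) = (-1, -2) then (1, 2)
     else if (x, y) = (-2, -1) then (2, 1)
     else if (x, y) = (-1, -3) then (2, 3)
     else (3, 2))"

lemma rank2_cartan_if_product_less_4:
  fixes x y :: int
  assumes "x < 0" "y < 0" "x * y < 4"
  shows "rank2_cartan x y"
proof -
  have "(-x) * (-y) \<ge> (-x) * 1" "(-x) * (-y) \<ge> 1 * (-y)"
    using assms by (intro mult_left_mono mult_right_mono; simp)+
  then have "x \<in> {-3, -2, -1}" "y \<in> {-3, -2, -1}" using assms by auto
  then show ?thesis using assms(3) unfolding rank2_cartan_def by auto
qed

lemma rank2_cartan_cases:
  assumes "rank2_cartan x y"
  obtains "x = -1" "y = -1" | "x = -1" "y = -2" | "x = -2" "y = -1" | "x = -1" "y = -3" | "x = -3" "y = -1"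
  using assms unfolding rank2_cartan_def by auto

lemma positive_root_coords_refl_e:
  assumes "rank2_cartan x y" "(a, b) \<in> positive_root_coords x y" "b > 0"
  shows "(- a - b * of_int x, b) \<in> positive_root_coords x y"
  using assms(1) by (cases rule: rank2_cartan_cases) (use assms(2,3) in \<open>auto simp: positive_root_coords_def\<close>)

lemma positive_root_coords_refl_f:
  assumes "rank2_cartan x y" "(a, b) \<in> positive_root_coords x y" "a > 0"
  shows "(a, - b - a * of_int y) \<in> positive_root_coords x y"
  using assms(1) by (cases rule: rank2_cartan_cases) (use assms(2,3) in \<open>auto simp: positive_root_coords_def\<close>)

lemma positive_root_coords_le_highest:
  assumes "rank2_cartan x y" "(a, b) \<in> positive_root_coords x y"
  shows "a \<le> fst (highest_root_coords x y) \<and> b \<le> snd (highest_root_coords x y)"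
  using assms(1) by (cases rule: rank2_cartan_cases)
    (use assms(2) in \<open>auto simp: positive_root_coords_def highest_root_coords_def\<close>)

lemma simple_root_coords: "(1, 0) \<in> positive_root_coords x y" "(0, 1) \<in> positive_root_coords x y"
  by (simp_all add: positive_root_coords_def)

text \<open>In coordinates \<open>X = q \<bullet> e\<close>, \<open>Y = q \<bullet> f\<close>: a point beyond the highest root hyperplane,
  on the negative side of \<open>e\<close> and strictly between two consecutive hyperplanes of some
  positive root satisfies \<open>q \<bullet> (f - x e) > 0\<close>, i.e. its mirror image in \<open>e\<^sup>\<bottom>\<close> is on the
  positive side of \<open>f\<close>. The hypothesis that the highest root is not orthogonal to \<open>e\<close>
  cannot be dropped for \<open>G2\<close> with \<open>e\<close> short (\<open>x = -3\<close>): take \<open>X = -0.6\<close>, \<open>Y = 1.5\<close>.\<close>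
lemma highest_root_beyond_imp_reflected_positive:
  fixes X Y :: real
  assumes "rank2_cartan x y" "highest_root_coords x y = (a0, b0)" "2 * a0 + b0 * of_int x \<noteq> 0"
    and "(a, b) \<in> positive_root_coords x y" "0 < a * X + b * Y" "a * X + b * Y < 1"
    and "X < 0" "a0 * X + b0 * Y > 1"
  shows "Y - of_int x * X > 0"
  using assms(1) by (cases rule: rank2_cartan_cases)
    (use assms(2-) in \<open>auto simp: positive_root_coords_def highest_root_coords_def\<close>)

lemma inner_scaleR_add_scaleR:
  "(a *\<^sub>R e + b *\<^sub>R f) \<bullet> v = a * (e \<bullet> v) + b * (f \<bullet> v)"
  "v \<bullet> (a *\<^sub>R e + b *\<^sub>R f) = a * (v \<bullet> e) + b * (v \<bullet> f)"
  by (simp_all add: inner_add_left inner_add_right)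

locale chamber_basis = fundamental_alcove +
  fixes e f :: vec2
  assumes e_root: "e \<in> R" and f_root: "f \<in> R"
    and p0_e_pos: "p0 \<bullet> e > 0" and p0_f_pos: "p0 \<bullet> f > 0"
    and wall_e: "wall R A0 (hyp e 0)" and wall_f: "wall R A0 (hyp f 0)"
    and hyp_e_f_distinct: "hyp e 0 \<noteq> hyp f 0"
begin

lemma chamber_basis_swap: "chamber_basis R A0 p0 \<rho> \<kappa> s f e"
  by (rule chamber_basis.intro[OF fundamental_alcove_axioms])
     (use e_root f_root p0_e_pos p0_f_pos wall_e wall_f hyp_e_f_distinct in \<open>unfold_locales; auto\<close>)

lemma det2_e_f: "det2 e f \<noteq> 0"
  using det2_nonzero_if_hyp_neq root_nonzero e_root f_root hyp_e_f_distinct by blast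

lemma root_coords_exist: obtains a b where "v = a *\<^sub>R e + b *\<^sub>R f"
  using det2_expansion[OF det2_e_f] by blast

lemma closure_inner_e_nonneg: "y \<in> closure A0 \<Longrightarrow> y \<bullet> e \<ge> 0"
  using closure_A0_same_side[OF e_root, of y 0] p0_e_pos by (simp add: zero_le_mult_iff)

lemma closure_point_on_e_wall: obtains p where "p \<in> closure A0" "p \<bullet> e = 0" "p \<bullet> f > 0"
proof -
  obtain x y where xy: "x \<noteq> y" "x \<in> hyp e 0 \<inter> closure A0" "y \<in> hyp e 0 \<inter> closure A0"
    using wall_e unfolding wall_def by blast
  then obtain p where p: "p \<noteq> 0" "p \<in> closure A0" "p \<bullet> e = 0"
    unfolding hyp_def by (cases "x = 0") auto
  have "p \<bullet> f \<ge> 0"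
    using closure_A0_same_side[OF f_root p(2), of 0] p0_f_pos by (simp add: zero_le_mult_iff)
  moreover have "p \<bullet> f \<noteq> 0" using det2_inner_eqI[OF det2_e_f, of p 0] p by auto
  ultimately show ?thesis using that p by simp
qed

lemma positive_root_coord_f_nonneg:
  assumes "a *\<^sub>R e + b *\<^sub>R f \<in> R" "p0 \<bullet> (a *\<^sub>R e + b *\<^sub>R f) > 0"
  shows "b \<ge> 0"
proof -
  obtain p where p: "p \<in> closure A0" "p \<bullet> e = 0" "p \<bullet> f > 0" by (rule closure_point_on_e_wall)
  have "(p \<bullet> (a *\<^sub>R e + b *\<^sub>R f) - of_int 0) * (p0 \<bullet> (a *\<^sub>R e + b *\<^sub>R f) - of_int 0) \<ge> 0"
    using closure_A0_same_side[OF assms(1) p(1)] .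
  then show ?thesis using assms(2) p(2,3) by (simp add: inner_scaleR_add_scaleR zero_le_mult_iff)
qed

lemma positive_root_coords_nonneg:
  assumes "a *\<^sub>R e + b *\<^sub>R f \<in> R" "p0 \<bullet> (a *\<^sub>R e + b *\<^sub>R f) > 0"
  shows "a \<ge> 0" "b \<ge> 0"
  using positive_root_coord_f_nonneg[OF assms]
    chamber_basis.positive_root_coord_f_nonneg[OF chamber_basis_swap, of b a] assms
  by (simp_all add: add.commute)

lemma root_coords_same_sign:
  assumes "a *\<^sub>R e + b *\<^sub>R f \<in> R"
  shows "(a \<ge> 0 \<and> b \<ge> 0) \<or> (a \<le> 0 \<and> b \<le> 0)"
proof (cases "p0 \<bullet> (a *\<^sub>R e + b *\<^sub>R f) > 0")
  case True
  then show ?thesis using positive_root_coords_nonneg[OF assms] by simp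
next
  case False
  have "p0 \<bullet> (a *\<^sub>R e + b *\<^sub>R f) \<noteq> 0" using A0_not_in_hyp[OF p0_in_A0 assms, of 0] by simp
  with False have "p0 \<bullet> ((- a) *\<^sub>R e + (- b) *\<^sub>R f) > 0"
    by (simp add: inner_add_right inner_diff_right)
  moreover have "(- a) *\<^sub>R e + (- b) *\<^sub>R f \<in> R" using uminus_root[OF assms] by simp
  ultimately show ?thesis using positive_root_coords_nonneg[of "- a" "- b"] by simp
qed

lemma refl_e_root_coords:
  assumes "a *\<^sub>R e + b *\<^sub>R f \<in> R"
  shows "(- a - b * cartan f e) *\<^sub>R e + b *\<^sub>R f \<in> R"
proof -
  have "cartan (a *\<^sub>R e + b *\<^sub>R f) e = 2 * a + b * cartan f e"
    using root_nonzero[OF e_root] by (simp add: cartan_def inner_scaleR_add_scaleR field_simps)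
  then have "a *\<^sub>R e + b *\<^sub>R f - (2 * a + b * cartan f e) *\<^sub>R e \<in> R"
    using root_reflect[OF e_root assms] by simp
  moreover have "a *\<^sub>R e + b *\<^sub>R f - k *\<^sub>R e = (a - k) *\<^sub>R e + b *\<^sub>R f" for k
    by (simp add: scaleR_diff_left)
  moreover have "a - (2 * a + b * cartan f e) = - a - b * cartan f e" by simp
  ultimately show ?thesis by metis
qed

lemma refl_f_root_coords:
  assumes "a *\<^sub>R e + b *\<^sub>R f \<in> R"
  shows "a *\<^sub>R e + (- b - a * cartan e f) *\<^sub>R f \<in> R"
  using chamber_basis.refl_e_root_coords[OF chamber_basis_swap, of b a] assms by (simp add: add.commute)

lemma inner_e_f_neg: "e \<bullet> f < 0"
proof -
  have "(- cartan f e) *\<^sub>R e + 1 *\<^sub>R f \<in> R" using refl_e_root_coords[of 0 1] f_root by simp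
  then have "cartan f e \<le> 0" using root_coords_same_sign by fastforce
  moreover have "e \<bullet> e > 0" using root_nonzero[OF e_root] by simp
  ultimately have le: "e \<bullet> f \<le> 0" by (auto simp: cartan_def divide_le_0_iff inner_commute)
  have "e \<bullet> f \<noteq> 0"
  proof
    assume ef: "e \<bullet> f = 0"
    have "\<delta> \<in> {e, -e, f, -f}" if "\<delta> \<in> R" for \<delta>
    proof -
      obtain a b where ab: "\<delta> = a *\<^sub>R e + b *\<^sub>R f" by (rule root_coords_exist)
      have "(- a) *\<^sub>R e + b *\<^sub>R f \<in> R"
        using refl_e_root_coords[of a b] that ab ef by (simp add: cartan_def inner_commute)
      then have "a = 0 \<or> b = 0"
        using root_coords_same_sign[of a b] root_coords_same_sign[of "- a" b] that ab by force
      then show ?thesis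
        using that ab root_multiple[OF f_root, of b] root_multiple[OF e_root, of a] by auto
    qed
    moreover have "e \<noteq> f" "e \<noteq> -f" "-e \<noteq> f" "-e \<noteq> -f"
      using det2_e_f by (auto simp: det2_def)
    moreover define R1 R2 where "R1 = R \<inter> {e, -e}" and "R2 = R \<inter> {f, -f}"
    ultimately have "R1 \<noteq> {}" "R2 \<noteq> {}" "R1 \<union> R2 = R" "R1 \<inter> R2 = {}"
      "\<forall>a\<in>R1. \<forall>b\<in>R2. a \<bullet> b = 0"
      using e_root f_root ef by (auto simp: inner_commute)
    then show False using root_system unfolding root_system_def by blast
  qed
  with le show ?thesis by simp
qed

lemma cartan_integers:
  obtains x y where "cartan f e = of_int x" "cartan e f = of_int y" "rank2_cartan x y"
proof -
  obtain x where x: "cartan f e = of_int x"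
    using cartan_integer[OF e_root f_root] by (metis Ints_cases)
  obtain y where y: "cartan e f = of_int y"
    using cartan_integer[OF f_root e_root] by (metis Ints_cases)
  have ee: "e \<bullet> e > 0" and ff: "f \<bullet> f > 0" using root_nonzero e_root f_root by auto
  have "cartan f e < 0" "cartan e f < 0"
    using inner_e_f_neg ee ff by (simp_all add: cartan_def divide_neg_pos inner_commute)
  then have "x < 0" "y < 0" using x y by simp_all
  moreover have "(e \<bullet> e) * (f \<bullet> f) - (e \<bullet> f)\<^sup>2 > 0" using det2_square[of e f] det2_e_f by simp
  then have "cartan f e * cartan e f < 4"
    using ee ff by (simp add: cartan_def inner_commute power2_eq_square field_simps)
  then have "x * y < 4" using x y by (metis of_int_less_iff of_int_mult of_int_numeral)
  ultimately show ?thesis using that x y rank2_cartan_if_product_less_4 by blast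
qed

lemma closure_inner_f_nonneg: "y \<in> closure A0 \<Longrightarrow> y \<bullet> f \<ge> 0"
  using chamber_basis.closure_inner_e_nonneg[OF chamber_basis_swap] .

lemma refl_e_lowers_positive_root:
  assumes \<delta>: "a *\<^sub>R e + b *\<^sub>R f \<in> R" and "b > 0" "(a *\<^sub>R e + b *\<^sub>R f) \<bullet> e > 0"
  obtains a' where "a' *\<^sub>R e + b *\<^sub>R f \<in> R" "0 \<le> a'" "a' + 1 \<le> a" "a = - a' - b * cartan f e"
proof -
  define k where "k = cartan (a *\<^sub>R e + b *\<^sub>R f) e"
  have "k \<in> \<int>" using cartan_integer[OF e_root \<delta>] unfolding k_def .
  moreover have "k > 0" using assms(3) root_nonzero[OF e_root] unfolding k_def cartan_def by simp
  ultimately have "k \<ge> 1" by (metis Ints_cases of_int_0_less_iff of_int_1_le_iff int_one_le_iff_zero_less)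
  moreover have "k = 2 * a + b * cartan f e"
    using root_nonzero[OF e_root] unfolding k_def by (simp add: cartan_def inner_scaleR_add_scaleR field_simps)
  moreover have "(- a - b * cartan f e) *\<^sub>R e + b *\<^sub>R f \<in> R" by (rule refl_e_root_coords[OF \<delta>])
  moreover have "- a - b * cartan f e \<ge> 0" using root_coords_same_sign[OF calculation(3)] \<open>b > 0\<close> by auto
  ultimately show ?thesis using that[of "- a - b * cartan f e"] by simp
qed

lemma refl_f_lowers_positive_root:
  assumes "a *\<^sub>R e + b *\<^sub>R f \<in> R" "a > 0" "(a *\<^sub>R e + b *\<^sub>R f) \<bullet> f > 0"
  obtains b' where "a *\<^sub>R e + b' *\<^sub>R f \<in> R" "0 \<le> b'" "b' + 1 \<le> b" "b = - b' - a * cartan e f"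
  using chamber_basis.refl_e_lowers_positive_root[OF chamber_basis_swap, of b a] assms
  by (metis add.commute)

text \<open>Every positive root is listed by \<open>positive_root_coords\<close>: by induction on its height,
  since some simple reflection lowers a positive non-simple root to a positive root.\<close>
lemma positive_root_coords_complete:
  assumes xy: "cartan f e = of_int x" "cartan e f = of_int y" "rank2_cartan x y"
    and "a *\<^sub>R e + b *\<^sub>R f \<in> R" "0 \<le> a" "0 \<le> b"
  shows "(a, b) \<in> positive_root_coords x y"
proof -
  obtain n :: nat where "a + b \<le> n" using real_arch_simple by blast
  with assms(4-) show ?thesis
  proof (induction n arbitrary: a b)
    case 0
    then have "a = 0" "b = 0" by simp_all
    with 0 have "0 \<in> R" by simp
    then show ?case using root_nonzero by blast
  next
    case (Suc n)
    let ?\<delta> = "a *\<^sub>R e + b *\<^sub>R f"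
    consider "b = 0" | "a = 0" | "a > 0" "b > 0" using Suc.prems(2,3) by linarith
    then show ?case
    proof cases
      case 1
      then show ?thesis
        using root_multiple[OF e_root, of a] Suc.prems simple_root_coords by force
    next
      case 2
      then show ?thesis
        using root_multiple[OF f_root, of b] Suc.prems simple_root_coords by force
    next
      case 3
      have "?\<delta> \<bullet> ?\<delta> > 0" using root_nonzero[OF Suc.prems(1)] by simp
      then have "?\<delta> \<bullet> e > 0 \<or> ?\<delta> \<bullet> f > 0"
        using 3 by (simp add: inner_scaleR_add_scaleR) (smt (verit) mult_pos_pos mult_nonneg_nonpos)
      then show ?thesis
      proof
        assume "?\<delta> \<bullet> e > 0"
        then obtain a' where a': "a' *\<^sub>R e + b *\<^sub>R f \<in> R" "0 \<le> a'" "a' + 1 \<le> a"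
          "a = - a' - b * of_int x"
          using refl_e_lowers_positive_root[OF Suc.prems(1) \<open>b > 0\<close>] xy(1) by metis
        then have "(a', b) \<in> positive_root_coords x y" using Suc by simp
        then show ?thesis using positive_root_coords_refl_e[OF xy(3) _ \<open>b > 0\<close>] a'(4) by simp
      next
        assume "?\<delta> \<bullet> f > 0"
        then obtain b' where b': "a *\<^sub>R e + b' *\<^sub>R f \<in> R" "0 \<le> b'" "b' + 1 \<le> b"
          "b = - b' - a * of_int y"
          using refl_f_lowers_positive_root[OF Suc.prems(1) \<open>a > 0\<close>] xy(2) by metis
        then have "(a, b') \<in> positive_root_coords x y" using Suc by simp
        then show ?thesis using positive_root_coords_refl_f[OF xy(3) _ \<open>a > 0\<close>] b'(4) by simp
      qed
    qed
  qed
qed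

lemma highest_root_coords_root:
  assumes xy: "cartan f e = of_int x" "cartan e f = of_int y" "rank2_cartan x y"
    and "highest_root_coords x y = (a, b)"
  shows "a *\<^sub>R e + b *\<^sub>R f \<in> R"
proof -
  have E: "1 *\<^sub>R e + 0 *\<^sub>R f \<in> R" and F: "0 *\<^sub>R e + 1 *\<^sub>R f \<in> R" using e_root f_root by simp_all
  show ?thesis
    using xy(3)
    by (cases rule: rank2_cartan_cases)
       (use assms(4) xy(1,2) refl_e_root_coords[OF F] refl_f_root_coords[OF E]
          refl_e_root_coords[OF refl_f_root_coords[OF E]] refl_f_root_coords[OF refl_e_root_coords[OF F]]
        in \<open>simp_all add: highest_root_coords_def\<close>)
qed

text \<open>The highest root dominates every positive root coordinatewise and is \<open>\<le> 1\<close> on the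
  closure of \<open>A0\<close>, so any other positive root takes the value 1 there in at most one point.\<close>
lemma affine_wall_root_eq_highest:
  assumes xy: "cartan f e = of_int x" "cartan e f = of_int y" "rank2_cartan x y"
    and \<theta>: "\<theta> \<in> R" "p0 \<bullet> \<theta> > 0" "wall R A0 (hyp \<theta> 1)"
    and hi: "highest_root_coords x y = (a1, b1)"
  shows "\<theta> = a1 *\<^sub>R e + b1 *\<^sub>R f"
proof -
  obtain a0 b0 where \<theta>_eq: "\<theta> = a0 *\<^sub>R e + b0 *\<^sub>R f" by (rule root_coords_exist)
  then have "(a0, b0) \<in> positive_root_coords x y"
    using positive_root_coords_complete[OF xy] positive_root_coords_nonneg \<theta>(1,2) by simp
  then have le: "a0 \<le> a1" "b0 \<le> b1" using positive_root_coords_le_highest[OF xy(3)] hi by auto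
  have on_wall: "(a1 - a0) * (r \<bullet> e) = 0" "(b1 - b0) * (r \<bullet> f) = 0"
    if r: "r \<in> closure A0" "r \<bullet> \<theta> = 1" for r
  proof -
    have "r \<bullet> (a1 *\<^sub>R e + b1 *\<^sub>R f) \<le> 1"
      using root_le_one_on_closure[OF highest_root_coords_root[OF xy hi] r(1)] .
    moreover have "(a1 - a0) * (r \<bullet> e) \<ge> 0" "(b1 - b0) * (r \<bullet> f) \<ge> 0"
      using closure_inner_e_nonneg[OF r(1)] closure_inner_f_nonneg[OF r(1)] le by simp_all
    moreover have "r \<bullet> (a1 *\<^sub>R e + b1 *\<^sub>R f) - r \<bullet> \<theta> = (a1 - a0) * (r \<bullet> e) + (b1 - b0) * (r \<bullet> f)"
      unfolding \<theta>_eq inner_scaleR_add_scaleR by (simp add: algebra_simps)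
    ultimately show "(a1 - a0) * (r \<bullet> e) = 0" "(b1 - b0) * (r \<bullet> f) = 0"
      using r(2) by linarith+
  qed
  obtain r r' where rr: "r \<noteq> r'" "r \<in> closure A0" "r' \<in> closure A0" "r \<bullet> \<theta> = 1" "r' \<bullet> \<theta> = 1"
    using \<theta>(3) unfolding wall_def hyp_def by auto
  have "a1 = a0"
  proof (rule ccontr)
    assume "a1 \<noteq> a0"
    then have "r \<bullet> e = 0" "r' \<bullet> e = 0" using on_wall rr by auto
    then have "b0 * (r \<bullet> f) = 1" "b0 * (r' \<bullet> f) = 1"
      using rr(4,5) unfolding \<theta>_eq inner_scaleR_add_scaleR by simp_all
    then have "r \<bullet> f = r' \<bullet> f" by (metis mult_cancel_left mult_zero_left zero_neq_one)
    then show False using det2_inner_eqI[OF det2_e_f] \<open>r \<bullet> e = 0\<close> \<open>r' \<bullet> e = 0\<close> rr(1) by metis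
  qed
  moreover have "b1 = b0"
  proof (rule ccontr)
    assume "b1 \<noteq> b0"
    then have "r \<bullet> f = 0" "r' \<bullet> f = 0" using on_wall rr by auto
    then have "a0 * (r \<bullet> e) = 1" "a0 * (r' \<bullet> e) = 1"
      using rr(4,5) unfolding \<theta>_eq inner_scaleR_add_scaleR by simp_all
    then have "r \<bullet> e = r' \<bullet> e" by (metis mult_cancel_left mult_zero_left zero_neq_one)
    then show False using det2_inner_eqI[OF det2_e_f] \<open>r \<bullet> f = 0\<close> \<open>r' \<bullet> f = 0\<close> rr(1) by metis
  qed
  ultimately show ?thesis using \<theta>_eq by simp
qed

section \<open>Minimal length in the coset of a descent\<close>

lemma dominant_same_side:
  assumes "z \<bullet> e > 0" "z \<bullet> f > 0" "\<delta> \<in> R"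
  shows "(z \<bullet> \<delta>) * (p0 \<bullet> \<delta>) \<ge> 0"
proof -
  obtain a b where ab: "\<delta> = a *\<^sub>R e + b *\<^sub>R f" by (rule root_coords_exist)
  then consider "a \<ge> 0" "b \<ge> 0" | "a \<le> 0" "b \<le> 0" using root_coords_same_sign assms(3) by blast
  then show ?thesis
  proof cases
    case 1
    then show ?thesis using assms(1,2) p0_e_pos p0_f_pos
      unfolding ab inner_scaleR_add_scaleR by (simp add: add_nonneg_nonneg)
  next
    case 2
    then have "a * (z \<bullet> e) + b * (z \<bullet> f) \<le> 0" "a * (p0 \<bullet> e) + b * (p0 \<bullet> f) \<le> 0"
      using assms(1,2) p0_e_pos p0_f_pos by (simp_all add: add_nonpos_nonpos mult_nonpos_nonneg)
    then show ?thesis unfolding ab inner_scaleR_add_scaleR by (rule mult_nonpos_nonpos)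
  qed
qed

lemma reflected_point_dominant:
  assumes \<theta>: "\<theta> \<in> R" "p0 \<bullet> \<theta> > 0" "wall R A0 (hyp \<theta> 1)" "\<theta> \<bullet> e \<noteq> 0"
    and \<alpha>: "\<alpha> \<in> R" "p0 \<bullet> \<alpha> > 0" "0 < q \<bullet> \<alpha>" "q \<bullet> \<alpha> < 1"
    and q: "q \<bullet> e < 0" "q \<bullet> \<theta> > 1"
  shows "refl e 0 q \<bullet> e > 0" "refl e 0 q \<bullet> f > 0"
proof -
  show "refl e 0 q \<bullet> e > 0" using inner_refl_self[OF root_nonzero[OF e_root], of 0 q] q(1) by simp
  obtain x y where xy: "cartan f e = of_int x" "cartan e f = of_int y" "rank2_cartan x y"
    by (rule cartan_integers)
  obtain a1 b1 where hi: "highest_root_coords x y = (a1, b1)" by fastforce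
  have \<theta>_eq: "\<theta> = a1 *\<^sub>R e + b1 *\<^sub>R f" by (rule affine_wall_root_eq_highest[OF xy \<theta>(1-3) hi])
  obtain a b where \<alpha>_eq: "\<alpha> = a *\<^sub>R e + b *\<^sub>R f" by (rule root_coords_exist)
  then have "(a, b) \<in> positive_root_coords x y"
    using positive_root_coords_complete[OF xy] positive_root_coords_nonneg \<alpha>(1,2) by simp
  moreover have "\<theta> \<bullet> e = (e \<bullet> e) / 2 * (2 * a1 + b1 * of_int x)"
    using xy(1) root_nonzero[OF e_root] unfolding \<theta>_eq cartan_def
    by (simp add: inner_scaleR_add_scaleR field_simps)
  then have "2 * a1 + b1 * of_int x \<noteq> 0" using \<theta>(4) by auto
  ultimately have "q \<bullet> f - of_int x * (q \<bullet> e) > 0"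
    using highest_root_beyond_imp_reflected_positive[OF xy(3) hi, of a b "q \<bullet> e" "q \<bullet> f"] \<alpha> q
    unfolding \<alpha>_eq \<theta>_eq inner_scaleR_add_scaleR by (simp add: inner_commute)
  moreover have "refl e 0 q \<bullet> f = q \<bullet> f - cartan f e * (q \<bullet> e)"
    using inner_refl[of e 0 q f 0] by (simp add: inner_diff_right)
  ultimately show "refl e 0 q \<bullet> f > 0" using xy(1) by simp
qed

lemma same_chamber_as_reflected_A0:
  assumes "refl e 0 q \<bullet> e > 0" "refl e 0 q \<bullet> f > 0" "\<delta> \<in> R"
  shows "(q \<bullet> \<delta>) * (refl e 0 p0 \<bullet> \<delta>) \<ge> 0"
proof -
  define \<delta>' where "\<delta>' = \<delta> - cartan \<delta> e *\<^sub>R e"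
  have "\<delta>' \<in> R" using root_reflect[OF e_root assms(3)] unfolding \<delta>'_def .
  moreover have refl_\<delta>: "refl e 0 v \<bullet> \<delta> = v \<bullet> \<delta>'" for v
    using inner_refl[of e 0 v \<delta> 0] unfolding \<delta>'_def by simp
  moreover have "q \<bullet> \<delta> = refl e 0 q \<bullet> \<delta>'"
    using refl_\<delta>[of "refl e 0 q"] refl_refl[OF root_nonzero[OF e_root]] by simp
  ultimately show ?thesis using dominant_same_side[OF assms(1,2)] by simp
qed

end

context fundamental_alcove
begin

lemma linear_wall_chamber_basis:
  assumes i: "i \<in> {1,2}"
  obtains e f where "chamber_basis R A0 p0 \<rho> \<kappa> s e f" "s i = refl e 0" "simple_wall i = hyp e 0"
proof -
  define i' where "i' = 3 - i"
  have i': "i' \<in> {1,2}" "i' \<noteq> i" using i unfolding i'_def by auto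
  define e where "e = (if p0 \<bullet> \<rho> i > 0 then \<rho> i else - \<rho> i)"
  define f where "f = (if p0 \<bullet> \<rho> i' > 0 then \<rho> i' else - \<rho> i')"
  have \<kappa>: "\<kappa> i = 0" "\<kappa> i' = 0" using linear_levels i i' by auto
  have e: "e \<in> R" "p0 \<bullet> e > 0" "hyp e 0 = simple_wall i" "refl e 0 = s i"
    using A0_not_in_hyp[OF p0_in_A0 simple_root[of i], of 0] simple_root[of i] uminus_root i
      hyp_uminus[of "\<rho> i" 0] refl_uminus[of "\<rho> i" 0] s_eq_refl[of i] \<kappa>
    unfolding e_def simple_wall_def by (auto simp: inner_minus_right)
  have f: "f \<in> R" "p0 \<bullet> f > 0" "hyp f 0 = simple_wall i'"
    using A0_not_in_hyp[OF p0_in_A0 simple_root[of i'], of 0] simple_root[of i'] uminus_root i'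
      hyp_uminus[of "\<rho> i'" 0] \<kappa>
    unfolding f_def simple_wall_def by (auto simp: inner_minus_right)
  have "simple_wall i \<noteq> simple_wall i'"
    using linear_walls_distinct i i' \<kappa> linear_levels unfolding simple_wall_def by auto
  moreover have "wall R A0 (simple_wall j)" if "j \<in> {0,1,2}" for j
    using wall_simple[OF that] unfolding simple_wall_def .
  ultimately have "chamber_basis R A0 p0 \<rho> \<kappa> s e f"
    using e f i i' by unfold_locales auto
  then show ?thesis using that e by simp
qed

lemma same_chamber_as_s_A0:
  assumes i: "i \<in> {1, 2}" and noncomm: "s 0 \<circ> s i \<circ> s 0 \<circ> s i \<noteq> id"
    and sep: "separates (simple_wall 0) q p0" "separates (simple_wall i) q p0"
    and \<alpha>: "\<alpha> \<in> R" "p0 \<bullet> \<alpha> > 0" "0 < q \<bullet> \<alpha>" "q \<bullet> \<alpha> < 1"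
    and \<delta>: "\<delta> \<in> R"
  shows "(q \<bullet> \<delta>) * (s i p0 \<bullet> \<delta>) \<ge> 0"
proof -
  obtain e f where "chamber_basis R A0 p0 \<rho> \<kappa> s e f" and se: "s i = refl e 0" "simple_wall i = hyp e 0"
    using linear_wall_chamber_basis[OF i] by blast
  then interpret chamber_basis R A0 p0 \<rho> \<kappa> s e f by simp
  obtain \<theta> where \<theta>: "\<theta> \<in> R" "simple_wall 0 = hyp \<theta> 1" "s 0 = refl \<theta> 1" "p0 \<bullet> \<theta> > 0"
    by (rule affine_wall_normal_form)
  have "p0 \<bullet> \<theta> \<le> 1" "p0 \<bullet> \<theta> \<noteq> 1"
    using root_le_one_on_closure[OF \<theta>(1)] closure_subset A0_not_in_hyp[OF _ \<theta>(1), of _ 1] p0_in_A0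
    by force+
  then have q_\<theta>: "q \<bullet> \<theta> > 1"
    using sep(1) separates_hyp_iff[OF root_nonzero[OF \<theta>(1)]] unfolding \<theta>(2)
    by (auto simp: mult_less_0_iff)
  have q_e: "q \<bullet> e < 0"
    using sep(2) separates_hyp_iff[OF root_nonzero[OF e_root]] p0_e_pos unfolding se(2)
    by (auto simp: mult_less_0_iff)
  have "\<theta> \<bullet> e \<noteq> 0"
  proof
    assume "\<theta> \<bullet> e = 0"
    then have "s 0 \<circ> s i = s i \<circ> s 0"
      using refl_commute_orthogonal root_nonzero e_root \<theta>(1) unfolding \<theta>(3) se(1) by metis
    then have "s 0 \<circ> s i \<circ> s 0 \<circ> s i = (s 0 \<circ> s 0) \<circ> (s i \<circ> s i)"
      by (metis comp_assoc)
    then show False using noncomm s_comp_s i by simp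
  qed
  moreover have "wall R A0 (hyp \<theta> 1)" using wall_simple[of 0] \<theta>(2) unfolding simple_wall_def by simp
  ultimately have "refl e 0 q \<bullet> e > 0" "refl e 0 q \<bullet> f > 0"
    using reflected_point_dominant[OF \<theta>(1,4) _ _ \<alpha>] q_e q_\<theta> by blast+
  then show ?thesis using same_chamber_as_reflected_A0 \<delta> se(1) by simp
qed

lemma coset_min_length:
  assumes \<alpha>: "\<alpha> \<in> R" and strip: "w ` A0 \<subseteq> strip \<alpha> c" "A0 \<subseteq> strip \<alpha> c"
    and i: "i \<in> {1, 2}" and desc: "right_descents s w = {0, i}"
    and noncomm: "s 0 \<circ> s i \<circ> s 0 \<circ> s i \<noteq> id"
    and v: "v \<in> W0 s"
  shows "len s (w \<circ> s i) \<le> len s (w \<circ> v)"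
proof -
  have "0 \<in> right_descents s w" using desc by simp
  then have "len s (w \<circ> s 0) \<noteq> len s w" unfolding right_descents_def by simp
  then have w: "w \<in> W" using len_comp_s_not_in_W[of w 0] by blast
  obtain w' where "w' \<in> W" "w \<circ> w' = id" using W_inverse[OF w] by blast
  define q where "q = w' p0"
  have wq: "w q = p0" using \<open>w \<circ> w' = id\<close> unfolding q_def by (metis comp_apply id_apply)
  have sep: "separates (simple_wall 0) q p0" "separates (simple_wall i) q p0"
    using right_descent_iff_separates[OF w wq] desc i by auto
  obtain \<alpha>0 where "\<alpha>0 \<in> R" "p0 \<bullet> \<alpha>0 > 0" "0 < q \<bullet> \<alpha>0" "q \<bullet> \<alpha>0 < 1"
    using strip_positive_root[OF w wq \<alpha> strip] .
  then have "separating_hyps (w \<circ> s i) \<subseteq> separating_hyps (w \<circ> v)"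
    using separating_hyps_comp_s_subset[OF w wq i v] same_chamber_as_s_A0[OF i noncomm sep] by blast
  moreover have "w \<circ> s i \<in> W" "w \<circ> v \<in> W" using W_comp w s_in_W i W0_subset_W v by auto
  ultimately show ?thesis
    using card_mono[OF finite_separating_hyps] len_eq_card_separating_hyps by simp
qed

end

lemma simple_system_fundamental_alcove:
  assumes "root_system R" "simple_system R A0 s"
  obtains p0 \<rho> \<kappa> where "fundamental_alcove R A0 p0 \<rho> \<kappa> s"
proof -
  obtain \<beta>0 \<beta>1 \<beta>2 k0 where ss: "alcove R A0" "0 \<in> closure A0" "\<beta>0 \<in> R" "\<beta>1 \<in> R" "\<beta>2 \<in> R"
      "k0 \<noteq> 0" "wall R A0 (hyp \<beta>0 k0)" "wall R A0 (hyp \<beta>1 0)" "wall R A0 (hyp \<beta>2 0)"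
      "hyp \<beta>1 0 \<noteq> hyp \<beta>2 0" "s 0 = refl \<beta>0 k0" "s 1 = refl \<beta>1 0" "s 2 = refl \<beta>2 0"
    using assms(2) unfolding simple_system_def by blast
  obtain p0 where "p0 \<in> A0" using in_components_nonempty ss(1) unfolding alcove_def by blast
  define \<rho> where "\<rho> j = (if j = 0 then \<beta>0 else if j = 1 then \<beta>1 else \<beta>2)" for j :: nat
  define \<kappa> where "\<kappa> j = (if j = 0 then k0 else 0)" for j :: nat
  have "fundamental_alcove R A0 p0 \<rho> \<kappa> s"
    by unfold_locales (use assms(1) ss \<open>p0 \<in> A0\<close> in \<open>auto simp: \<rho>_def \<kappa>_def\<close>)
  then show ?thesis by (rule that)
qed

theorem proposition4p41:
  fixes R :: "vec2 set" and A0 :: "vec2 set" and s :: "nat \<Rightarrow> vec2 \<Rightarrow> vec2"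
    and w :: "vec2 \<Rightarrow> vec2" and \<alpha> :: vec2 and c :: int and i :: nat
  assumes "root_system R"
    and "simple_system R A0 s"
    and "w \<in> affW R"
    and "\<alpha> \<in> R"
    and "w ` A0 \<subseteq> strip \<alpha> c" and "A0 \<subseteq> strip \<alpha> c"
    and "i \<in> {1, 2}"
    and "right_descents s w = {0, i}"
    and "s 0 \<circ> s i \<circ> s 0 \<circ> s i \<noteq> id"
  shows "\<forall>u \<in> (\<lambda>v. w \<circ> v) ` W0 s. len s (w \<circ> s i) \<le> len s u"
proof -
  obtain p0 \<rho> \<kappa> where "fundamental_alcove R A0 p0 \<rho> \<kappa> s"
    using simple_system_fundamental_alcove[OF assms(1,2)] .
  then show ?thesis using fundamental_alcove.coset_min_length[OF _ assms(4-9)] by blast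
qed

end
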